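(* Let $p$ be a program. Then $p$ is in $\to_{\mathrm{und}}$-normal form (there is no $q$ with $p\to_{\mathrm{und}}q$) if and only if $\mathrm{unorm}(p)$.
   Context: Syntax. Terms $t,u,s ::= x\mid\lambda x.t\mid t\,u$; values $v ::= \lambda x.t$ (variables are not values); environments $E ::= \epsilon\mid E[x\leftarrow t]$; programs $p ::= (t,E)$; $x$ is bound in $E$ and $u$ in $(u,E[x\leftarrow t])$; up to $\alpha$; appended ES bind variables not in the domain of the program/context. Inert terms $i ::= x\mid i\,f$, fireballs $f ::= v\mid i$, non-variable inert terms $i^{+} ::= i\,f$. Contexts. Open term evaluation contexts $\mathcal{H} ::= \langle\cdot\rangle\mid\mathcal{H}\,t\mid i\,\mathcal{H}$; applicative term contexts $\mathcal{H}^{@} ::= \langle\cdot\rangle\,t\mid\mathcal{H}^{@}\,t\mid i\,\mathcal{H}^{@}$. Term contexts $C ::= \langle\cdot\rangle\mid C\,t\mid t\,C$; environment contexts $G ::= E[x\leftarrow C]\mid G[x\leftarrow u]$; program contexts $P ::= (C,E)\mid(t,G)$. Appending: $(t,E)@[x\leftarrow u]=(t,E[x\leftarrow u])$, $(C,E)@[x\leftarrow u]=(C,E[x\leftarrow u])$, $(t,G)@[x\leftarrow u]=(t,G[x\leftarrow u])$, and $(t,E)@[x\leftarrow C]:=(t,E[x\leftarrow C])$. Plugging: $(C,E)\langle(t,E')\rangle=(C\langle t\rangle,E'E)$; $(u,E[x\leftarrow C])\langle(t,E')\rangle=(u,E[x\leftarrow C\langle t\rangle]E')$; $(u,G[x\leftarrow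 s])\langle(t,E)\rangle=((u,G)\langle(t,E)\rangle)@[x\leftarrow s]$; $P\langle t\rangle:=P\langle(t,\epsilon)\rangle$. Look-up $P(x)=t$ if the ES list of $P$ contains $[x\leftarrow t]$ with $t$ a term, $\bot$ otherwise. $v^{\alpha}$: copy of $v$ with fresh bound variables. Variable sets. $nv(x)=\{x\}$, $nv(\lambda x.t)=\emptyset$, $nv(tu)=nv(t)\cup nv(u)$; $nv((t,\epsilon))=nv(t)$, $nv((t,E[x\leftarrow u]))=nv((t,E))$ if $x\notin nv((t,E))$, else $(nv((t,E))\setminus\{x\})\cup nv(u)$. $an(\lambda x.t)=an(x)=\emptyset$; $an(tu)=\{x\}\cup an(u)$ if $t=x$ variable, else $an(t)\cup an(u)$; $an((t,\epsilon))=an(t)$; $an((t,E[x\leftarrow u]))$ is $an((t,E))$ if $x\notin nv((t,E))$; $(an((t,E))\setminus\{x\})\cup an(u)$ if $x\in nv((t,E))$ and ($x\notin an((t,E))$ or $u$ not a variable); $(an((t,E))\setminus\{x\})\cup\{y\}$ if $x\in nv((t,E))$, $x\in an((t,E))$, $u=y$ variable; $an(\langle\cdot\rangle)=\emptyset$, $an(\mathcal{H}\,t)=an(\mathcal{H})$, $an(i\,\mathcal{H})=an(i)\cup an(\mathcal{H})$. $un(\lambda x.t)=\emptyset$, $un(x)=\{x\}$, $un(tu)=un(u)$ if $t$ variable, else $un(t)\cup un(u)$; $un((t,\epsilon))=un(t)$; $un((t,E[x\leftarrow u]))$ is $un((t,E))$ if $x\notin un((t,E))$ and ($x\notin nv((t,E))$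 or $u$ a variable), and $(un((t,E))\setminus\{x\})\cup un(u)$ if $x\in un((t,E))$ or ($x\in nv((t,E))$ and $u$ not a variable); $un(\langle\cdot\rangle)=\emptyset$, $un(\mathcal{H}\,t)=un(\mathcal{H})$, $un(i\,\mathcal{H})=un(i)\cup un(\mathcal{H})$. $\mathrm{upd}(S,x,y):=S$ if $x\notin S$, else $(S\setminus\{x\})\cup\{y\}$. Multiplicative contexts $P\in\mathcal{M}_{{\mathcal{U}},{\mathcal{A}}}$, inductively: $(\mathcal{H},\epsilon)\in\mathcal{M}_{un(\mathcal{H}),an(\mathcal{H})}$; and, each with premise $P\in\mathcal{M}_{{\mathcal{U}},{\mathcal{A}}}$: $x\in{\mathcal{U}}\cup{\mathcal{A}}$ $\Rightarrow$ $P@[x\leftarrow y]\in\mathcal{M}_{\mathrm{upd}({\mathcal{U}},x,y),\mathrm{upd}({\mathcal{A}},x,y)}$; $x\notin{\mathcal{U}}\cup{\mathcal{A}}$ $\Rightarrow$ $P@[x\leftarrow t]\in\mathcal{M}_{{\mathcal{U}},{\mathcal{A}}}$; $x\in{\mathcal{U}}\cup{\mathcal{A}}$ $\Rightarrow$ $P@[x\leftarrow i^{+}]\in\mathcal{M}_{({\mathcal{U}}\setminus\{x\})\cup un(i^{+}),({\mathcal{A}}\setminus\{x\})\cup an(i^{+})}$; $x\in{\mathcal{U}}\setminus{\mathcal{A}}$ $\Rightarrow$ $P@[x\leftarrow v]\in\mathcal{M}_{{\mathcal{U}}\setminus\{x\},{\mathcal{A}}}$; $x\notin{\mathcal{U}}\cup{\mathcal{A}}$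 $\Rightarrow$ $P\langle x\rangle@[x\leftarrow\mathcal{H}]\in\mathcal{M}_{{\mathcal{U}}\cup un(\mathcal{H}),{\mathcal{A}}\cup an(\mathcal{H})}$. Exponential contexts $P\in\mathcal{X}_{{\mathcal{U}},{\mathcal{A}}}$, inductively: $(\mathcal{H}^{@},\epsilon)\in\mathcal{X}_{un(\mathcal{H}^{@}),an(\mathcal{H}^{@})}$; $P\in\mathcal{M}_{{\mathcal{U}},{\mathcal{A}}}$, $x\notin{\mathcal{U}}\cup{\mathcal{A}}$ $\Rightarrow$ $P\langle x\rangle@[x\leftarrow\mathcal{H}^{@}]\in\mathcal{X}_{({\mathcal{U}}\setminus\{x\})\cup un(\mathcal{H}^{@}),{\mathcal{A}}\cup an(\mathcal{H}^{@})}$; and, each with premise $P\in\mathcal{X}_{{\mathcal{U}},{\mathcal{A}}}$: $x\in{\mathcal{U}}\cup{\mathcal{A}}$ $\Rightarrow$ $P@[x\leftarrow y]\in\mathcal{X}_{\mathrm{upd}({\mathcal{U}},x,y),\mathrm{upd}({\mathcal{A}},x,y)}$; $x\in{\mathcal{U}}\cup{\mathcal{A}}$ $\Rightarrow$ $P@[x\leftarrow i^{+}]\in\mathcal{X}_{({\mathcal{U}}\setminus\{x\})\cup un(i^{+}),({\mathcal{A}}\setminus\{x\})\cup an(i^{+})}$; $x\notin{\mathcal{U}}\cup{\mathcal{A}}$ $\Rightarrow$ $P@[x\leftarrow t]\in\mathcal{X}_{{\mathcal{U}},{\mathcal{A}}}$; $x\in{\mathcal{U}}\setminus{\mathcal{A}}$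 $\Rightarrow$ $P@[x\leftarrow v]\in\mathcal{X}_{{\mathcal{U}}\setminus\{x\},{\mathcal{A}}}$; $x\notin{\mathcal{A}}$ $\Rightarrow$ $P\langle x\rangle@[x\leftarrow\langle\cdot\rangle]\in\mathcal{X}_{{\mathcal{U}}\setminus\{x\},{\mathcal{A}}}$. Useful Open CbNeed rules: $P\langle(\lambda x.t)u\rangle\to_{\mathrm{um}}P\langle(t,[x\leftarrow u])\rangle$ if $P\in\mathcal{M}_{{\mathcal{U}},{\mathcal{A}}}$ for some ${\mathcal{U}},{\mathcal{A}}$; $P\langle x\rangle\to_{\mathrm{ue}}P\langle v^{\alpha}\rangle$ if $P\in\mathcal{X}_{{\mathcal{U}},{\mathcal{A}}}$ for some ${\mathcal{U}},{\mathcal{A}}$ and $P(x)=v$; $\to_{\mathrm{und}}:=\to_{\mathrm{um}}\cup\to_{\mathrm{ue}}$. Predicates, inductively. $\mathrm{gvar}_x((x,\epsilon))$; $\mathrm{gvar}_x(p)\Rightarrow\mathrm{gvar}_y(p@[x\leftarrow y])$; $\mathrm{gvar}_x(p)$, $z\neq x$ $\Rightarrow$ $\mathrm{gvar}_x(p@[z\leftarrow t])$. $\mathrm{uabs}((v,\epsilon))$; $\mathrm{gvar}_x(p)\Rightarrow\mathrm{uabs}(p@[x\leftarrow v])$; $\mathrm{uabs}(p)\Rightarrow\mathrm{uabs}(p@[x\leftarrow t])$. $\mathrm{uinert}((i^{+},\epsilon))$; $\mathrm{gvar}_x(p)\Rightarrow\mathrm{uinert}(p@[x\leftarrow i^{+}])$;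 $\mathrm{uinert}(p)$, $x\in nv(p)$ $\Rightarrow$ $\mathrm{uinert}(p@[x\leftarrow i])$; $\mathrm{uinert}(p)$, $x\in un(p)$, $x\notin an(p)$ $\Rightarrow$ $\mathrm{uinert}(p@[x\leftarrow v])$; $\mathrm{uinert}(p)$, $x\notin nv(p)$ $\Rightarrow$ $\mathrm{uinert}(p@[x\leftarrow t])$. $\mathrm{unorm}(p)$ iff $\mathrm{uinert}(p)$ or $\mathrm{uabs}(p)$ or $\mathrm{gvar}_x(p)$ for some $x$. *)

theory Defs
  imports Main
begin

type_synonym var = nat

datatype trm = Var var | Lam var trm | App trm trm

(* an environment E = [x1<-t1]...[xn<-tn] is the list [(x1,t1),...,(xn,tn)];
   the head is the innermost ES, the last element the outermost one;
   E[x<-t] is E @ [(x,t)] *)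
type_synonym env = "(var \<times> trm) list"

type_synonym prog = "trm \<times> env"

fun is_var :: "trm \<Rightarrow> bool" where
  "is_var (Var x) = True" | "is_var _ = False"

fun is_val :: "trm \<Rightarrow> bool" where
  "is_val (Lam x t) = True" | "is_val _ = False"

inductive inert :: "trm \<Rightarrow> bool" where
  inert_var: "inert (Var x)"
| inert_app: "inert i \<Longrightarrow> is_val f \<or> inert f \<Longrightarrow> inert (App i f)"

definition fireball :: "trm \<Rightarrow> bool" where
  "fireball f \<longleftrightarrow> is_val f \<or> inert f"

definition inert_plus :: "trm \<Rightarrow> bool" where
  "inert_plus t \<longleftrightarrow> inert t \<and> \<not> is_var t"

definition app_es :: "prog \<Rightarrow> var \<Rightarrow> trm \<Rightarrow> prog" where
  "app_es p x u = (fst p, snd p @ [(x, u)])"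

definition pdom :: "prog \<Rightarrow> var set" where
  "pdom p = fst ` set (snd p)"

fun fv :: "trm \<Rightarrow> var set" where
  "fv (Var x) = {x}"
| "fv (Lam x t) = fv t - {x}"
| "fv (App t u) = fv t \<union> fv u"

(* free variables of a program; the environment is traversed from the outermost ES *)
fun fv_r :: "trm \<Rightarrow> env \<Rightarrow> var set" where
  "fv_r t [] = fv t"
| "fv_r t ((x,u) # R) = (fv_r t R - {x}) \<union> fv u"

definition fvp :: "prog \<Rightarrow> var set" where
  "fvp p = fv_r (fst p) (rev (snd p))"

fun bl :: "trm \<Rightarrow> var list" where
  "bl (Var x) = []"
| "bl (Lam x t) = x # bl t"
| "bl (App t u) = bl t @ bl u"

definition pbl :: "prog \<Rightarrow> var list" where
  "pbl p = bl (fst p) @ concat (map (\<lambda>(x,u). x # bl u) (snd p))"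

(* the program is a Barendregt representative of its alpha-class:
   all binders pairwise distinct, and no bound name occurs free *)
definition wellnamed :: "prog \<Rightarrow> bool" where
  "wellnamed p \<longleftrightarrow> distinct (pbl p) \<and> set (pbl p) \<inter> fvp p = {}"

fun vars :: "trm \<Rightarrow> var set" where
  "vars (Var x) = {x}"
| "vars (Lam x t) = insert x (vars t)"
| "vars (App t u) = vars t \<union> vars u"

definition pvars :: "prog \<Rightarrow> var set" where
  "pvars p = vars (fst p) \<union> (\<Union>(x,u)\<in>set (snd p). insert x (vars u))"

(* swapping two names (a capture-free renaming when z does not occur) *)
definition sw :: "var \<Rightarrow> var \<Rightarrow> var \<Rightarrow> var" where
  "sw a b c = (if c = a then b else if c = b then a else c)"

fun swap :: "var \<Rightarrow> var \<Rightarrow> trm \<Rightarrow> trm" where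
  "swap a b (Var x) = Var (sw a b x)"
| "swap a b (Lam x t) = Lam (sw a b x) (swap a b t)"
| "swap a b (App t u) = App (swap a b t) (swap a b u)"

fun nv :: "trm \<Rightarrow> var set" where
  "nv (Var x) = {x}"
| "nv (Lam x t) = {}"
| "nv (App t u) = nv t \<union> nv u"

fun an :: "trm \<Rightarrow> var set" where
  "an (Lam x t) = {}"
| "an (Var x) = {}"
| "an (App t u) = (case t of Var x \<Rightarrow> {x} \<union> an u | _ \<Rightarrow> an t \<union> an u)"

fun un :: "trm \<Rightarrow> var set" where
  "un (Lam x t) = {}"
| "un (Var x) = {x}"
| "un (App t u) = (case t of Var x \<Rightarrow> un u | _ \<Rightarrow> un t \<union> un u)"

fun nv_r :: "trm \<Rightarrow> env \<Rightarrow> var set" where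
  "nv_r t [] = nv t"
| "nv_r t ((x,u) # R) =
     (if x \<notin> nv_r t R then nv_r t R else (nv_r t R - {x}) \<union> nv u)"

definition nvp :: "prog \<Rightarrow> var set" where
  "nvp p = nv_r (fst p) (rev (snd p))"

fun an_r :: "trm \<Rightarrow> env \<Rightarrow> var set" where
  "an_r t [] = an t"
| "an_r t ((x,u) # R) =
     (if x \<notin> nv_r t R then an_r t R
      else if x \<notin> an_r t R \<or> \<not> is_var u then (an_r t R - {x}) \<union> an u
      else (case u of Var y \<Rightarrow> (an_r t R - {x}) \<union> {y} | _ \<Rightarrow> {}))"

definition anp :: "prog \<Rightarrow> var set" where
  "anp p = an_r (fst p) (rev (snd p))"

fun un_r :: "trm \<Rightarrow> env \<Rightarrow> var set" where
  "un_r t [] = un t"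
| "un_r t ((x,u) # R) =
     (if x \<notin> un_r t R \<and> (x \<notin> nv_r t R \<or> is_var u) then un_r t R
      else (un_r t R - {x}) \<union> un u)"

definition unp :: "prog \<Rightarrow> var set" where
  "unp p = un_r (fst p) (rev (snd p))"

definition upd :: "var set \<Rightarrow> var \<Rightarrow> var \<Rightarrow> var set" where
  "upd S x y = (if x \<notin> S then S else (S - {x}) \<union> {y})"

datatype tctx = Hole | CAppL tctx trm | CAppR trm tctx

fun plugC :: "tctx \<Rightarrow> trm \<Rightarrow> trm" where
  "plugC Hole t = t"
| "plugC (CAppL C u) t = App (plugC C t) u"
| "plugC (CAppR u C) t = App u (plugC C t)"

inductive isH :: "tctx \<Rightarrow> bool" where
  "isH Hole"
| "isH H \<Longrightarrow> isH (CAppL H t)"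
| "inert i \<Longrightarrow> isH H \<Longrightarrow> isH (CAppR i H)"

inductive isHa :: "tctx \<Rightarrow> bool" where
  "isHa (CAppL Hole t)"
| "isHa H \<Longrightarrow> isHa (CAppL H t)"
| "inert i \<Longrightarrow> isHa H \<Longrightarrow> isHa (CAppR i H)"

fun ctx_an :: "tctx \<Rightarrow> var set" where
  "ctx_an Hole = {}"
| "ctx_an (CAppL C t) = ctx_an C"
| "ctx_an (CAppR i C) = an i \<union> ctx_an C"

fun ctx_un :: "tctx \<Rightarrow> var set" where
  "ctx_un Hole = {}"
| "ctx_un (CAppL C t) = ctx_un C"
| "ctx_un (CAppR i C) = un i \<union> ctx_un C"

(* program contexts P ::= (C,E) | (t,G), with G ::= E[x<-C] | G[x<-u];
   PG t E x C E' stands for (t, E[x<-C]E') *)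
datatype pctx = PC tctx env | PG trm env var tctx env

fun appP :: "pctx \<Rightarrow> var \<Rightarrow> trm \<Rightarrow> pctx" where
  "appP (PC C E) x u = PC C (E @ [(x,u)])"
| "appP (PG t E y C E') x u = PG t E y C (E' @ [(x,u)])"

definition appC :: "prog \<Rightarrow> var \<Rightarrow> tctx \<Rightarrow> pctx" where
  "appC p x C = PG (fst p) (snd p) x C []"

fun plugP :: "pctx \<Rightarrow> prog \<Rightarrow> prog" where
  "plugP (PC C E) (t, E') = (plugC C t, E' @ E)"
| "plugP (PG u E x C E2) (t, E') = (u, E @ [(x, plugC C t)] @ E' @ E2)"

fun cdom :: "pctx \<Rightarrow> var set" where
  "cdom (PC C E) = fst ` set E"
| "cdom (PG t E x C E') = fst ` set E \<union> {x} \<union> fst ` set E'"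

(* look-up P(x): the ES [x<-t] of P whose scope contains the hole
   (the innermost such, i.e. the first in list order) *)
fun lookupP :: "pctx \<Rightarrow> var \<Rightarrow> trm option" where
  "lookupP (PC C E) x = map_of E x"
| "lookupP (PG t E y C E') x = map_of E' x"

inductive isM :: "pctx \<Rightarrow> var set \<Rightarrow> var set \<Rightarrow> bool" where
  M_base: "isH H \<Longrightarrow> isM (PC H []) (ctx_un H) (ctx_an H)"
| M_var: "isM P U A \<Longrightarrow> x \<notin> cdom P \<Longrightarrow> x \<in> U \<union> A \<Longrightarrow>
     isM (appP P x (Var y)) (upd U x y) (upd A x y)"
| M_gc: "isM P U A \<Longrightarrow> x \<notin> cdom P \<Longrightarrow> x \<notin> U \<union> A \<Longrightarrow>
     isM (appP P x t) U A"
| M_inert: "isM P U A \<Longrightarrow> x \<notin> cdom P \<Longrightarrow> x \<in> U \<union> A \<Longrightarrow> inert_plus i \<Longrightarrow>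
     isM (appP P x i) ((U - {x}) \<union> un i) ((A - {x}) \<union> an i)"
| M_val: "isM P U A \<Longrightarrow> x \<notin> cdom P \<Longrightarrow> x \<in> U - A \<Longrightarrow> is_val v \<Longrightarrow>
     isM (appP P x v) (U - {x}) A"
| M_hole: "isM P U A \<Longrightarrow> x \<notin> cdom P \<Longrightarrow> x \<notin> U \<union> A \<Longrightarrow> isH H \<Longrightarrow>
     isM (appC (plugP P (Var x, [])) x H) (U \<union> ctx_un H) (A \<union> ctx_an H)"

inductive isX :: "pctx \<Rightarrow> var set \<Rightarrow> var set \<Rightarrow> bool" where
  X_base: "isHa H \<Longrightarrow> isX (PC H []) (ctx_un H) (ctx_an H)"
| X_fromM: "isM P U A \<Longrightarrow> x \<notin> cdom P \<Longrightarrow> x \<notin> U \<union> A \<Longrightarrow> isHa H \<Longrightarrow>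
     isX (appC (plugP P (Var x, [])) x H) ((U - {x}) \<union> ctx_un H) (A \<union> ctx_an H)"
| X_var: "isX P U A \<Longrightarrow> x \<notin> cdom P \<Longrightarrow> x \<in> U \<union> A \<Longrightarrow>
     isX (appP P x (Var y)) (upd U x y) (upd A x y)"
| X_inert: "isX P U A \<Longrightarrow> x \<notin> cdom P \<Longrightarrow> x \<in> U \<union> A \<Longrightarrow> inert_plus i \<Longrightarrow>
     isX (appP P x i) ((U - {x}) \<union> un i) ((A - {x}) \<union> an i)"
| X_gc: "isX P U A \<Longrightarrow> x \<notin> cdom P \<Longrightarrow> x \<notin> U \<union> A \<Longrightarrow>
     isX (appP P x t) U A"
| X_val: "isX P U A \<Longrightarrow> x \<notin> cdom P \<Longrightarrow> x \<in> U - A \<Longrightarrow> is_val v \<Longrightarrow>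
     isX (appP P x v) (U - {x}) A"
| X_hole: "isX P U A \<Longrightarrow> x \<notin> cdom P \<Longrightarrow> x \<notin> A \<Longrightarrow>
     isX (appC (plugP P (Var x, [])) x Hole) (U - {x}) A"

(* P<(\<lambda>x.t)u> \<rightarrow>um P<(t,[x<-u])>; the bound name x is first renamed to a
   name z occurring nowhere in the program (so that the appended ES binds a
   variable not in the domain of P) *)
definition um_step :: "prog \<Rightarrow> prog \<Rightarrow> bool" where
  "um_step p q \<longleftrightarrow> (\<exists>P U A x t u z. isM P U A \<and> p = plugP P (App (Lam x t) u, []) \<and>
      z \<notin> pvars p \<and> q = plugP P (swap x z t, [(z, u)]))"

(* P<x> \<rightarrow>ue P<v^\<alpha>> if P(x) = v; v^\<alpha> is alpha-equivalent to v, and the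
   resulting program is the same up to alpha whichever copy is used *)
definition ue_step :: "prog \<Rightarrow> prog \<Rightarrow> bool" where
  "ue_step p q \<longleftrightarrow> (\<exists>P U A x v. isX P U A \<and> p = plugP P (Var x, []) \<and>
      lookupP P x = Some v \<and> is_val v \<and> q = plugP P (v, []))"

definition und_step :: "prog \<Rightarrow> prog \<Rightarrow> bool" where
  "und_step p q \<longleftrightarrow> um_step p q \<or> ue_step p q"

inductive gvar :: "var \<Rightarrow> prog \<Rightarrow> bool" where
  "gvar x (Var x, [])"
| "gvar x p \<Longrightarrow> x \<notin> pdom p \<Longrightarrow> gvar y (app_es p x (Var y))"
| "gvar x p \<Longrightarrow> z \<notin> pdom p \<Longrightarrow> z \<noteq> x \<Longrightarrow> gvar x (app_es p z t)"

inductive uabs :: "prog \<Rightarrow> bool" where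
  "is_val v \<Longrightarrow> uabs (v, [])"
| "gvar x p \<Longrightarrow> x \<notin> pdom p \<Longrightarrow> is_val v \<Longrightarrow> uabs (app_es p x v)"
| "uabs p \<Longrightarrow> x \<notin> pdom p \<Longrightarrow> uabs (app_es p x t)"

inductive uinert :: "prog \<Rightarrow> bool" where
  "inert_plus i \<Longrightarrow> uinert (i, [])"
| "gvar x p \<Longrightarrow> x \<notin> pdom p \<Longrightarrow> inert_plus i \<Longrightarrow> uinert (app_es p x i)"
| "uinert p \<Longrightarrow> x \<notin> pdom p \<Longrightarrow> x \<in> nvp p \<Longrightarrow> inert i \<Longrightarrow> uinert (app_es p x i)"
| "uinert p \<Longrightarrow> x \<notin> pdom p \<Longrightarrow> x \<in> unp p \<Longrightarrow> x \<notin> anp p \<Longrightarrow> is_val v \<Longrightarrow>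
     uinert (app_es p x v)"
| "uinert p \<Longrightarrow> x \<notin> pdom p \<Longrightarrow> x \<notin> nvp p \<Longrightarrow> uinert (app_es p x t)"

definition unorm :: "prog \<Rightarrow> bool" where
  "unorm p \<longleftrightarrow> uinert p \<or> uabs p \<or> (\<exists>x. gvar x p)"

end

theory Submission
  imports Defs
begin

text \<open>
  Both directions go through the shape of the multiplicative and exponential contexts of
  \<open>p@[x\<leftarrow>u]\<close>: such a context either extends a context of \<open>p\<close> by the ES, or has its hole
  inside \<open>u\<close>, and then \<open>x\<close> sits at a multiplicative position of \<open>p\<close> (hence \<open>x \<in> nvp p\<close>)
  or at an exponential one (hence \<open>x \<in> anp p\<close>). The side conditions of the rules for
  \<open>unorm\<close> exclude exactly these cases, so useful normal forms have no redex.

  Conversely, by induction on the environment: a redex of \<open>p\<close> survives appending \<open>[x\<leftarrow>u]\<close>,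
  and appending \<open>[x\<leftarrow>u]\<close> to a normal form yields a normal form or a redex. The crux is when
  the ES cannot simply extend the context of a redex because \<open>x\<close> is needed by it and \<open>u\<close> is
  not a fireball (or \<open>x\<close> is applied by it and \<open>u\<close> is a value): then \<open>x\<close> must itself occur at
  a multiplicative (exponential) position of \<open>p\<close>, with a context that does not need \<open>x\<close>, so
  that a redex can be placed inside \<open>u\<close> (or \<open>x\<close> be substituted). This refocusing is proved
  by induction on the environment, following how the needed and applied sets of a context
  evolve when an ES is appended.
\<close>

lemma prog_induct [case_names Nil app_es]:
  assumes "\<And>t. Q (t, [])" and "\<And>p x u. Q p \<Longrightarrow> Q (app_es p x u)"
  shows "Q p"
proof -
  obtain t E where p: "p = (t, E)" by fastforce
  have "Q (t, E)"
  proof (induction E rule: rev_induct)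
    case (snoc a E)
    then show ?case using assms(2)[of "(t, E)" "fst a" "snd a"] by (simp add: app_es_def)
  qed (rule assms(1))
  then show ?thesis by (simp add: p)
qed

lemma app_es_eq_iff [simp]: "app_es p x u = app_es p' x' u' \<longleftrightarrow> p = p' \<and> x = x' \<and> u = u'"
  by (cases p; cases p') (auto simp: app_es_def)

lemma app_es_neq_Nil [simp]: "app_es p x u \<noteq> (t, [])" "(t, []) \<noteq> app_es p x u"
  by (simp_all add: app_es_def)

lemma pdom_app_es [simp]: "pdom (app_es p x u) = insert x (pdom p)"
  by (auto simp: pdom_def app_es_def)

lemma plugP_appP [simp]: "plugP (appP P x u) q = app_es (plugP P q) x u"
  by (cases P; cases q) (auto simp: app_es_def)

lemma plugP_appC [simp]: "plugP (appC p x H) (s, []) = app_es p x (plugC H s)"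
  by (cases p) (auto simp: app_es_def appC_def)

lemma pdom_plugP [simp]: "pdom (plugP P (s, [])) = cdom P"
  by (cases P) (auto simp: pdom_def)

lemma plugP_eq_Nil_iff: "plugP P (s, []) = (t, []) \<longleftrightarrow> (\<exists>C. P = PC C [] \<and> plugC C s = t)"
  by (cases P) auto

lemma lookupP_appP [simp]:
  "lookupP (appP P x u) w = (case lookupP P w of None \<Rightarrow> if w = x then Some u else None | Some v \<Rightarrow> Some v)"
  by (cases P) (auto simp: map_add_def split: option.split)

lemma lookupP_appC [simp]: "lookupP (appC p x H) w = None"
  by (simp add: appC_def)

lemma lookupP_eq_None: "w \<notin> cdom P \<Longrightarrow> lookupP P w = None"
  by (cases P) (auto simp: map_of_eq_None_iff)

lemma lookupP_appP_val:
  assumes "pred_option is_val (lookupP (appP P x u) w)" and "x \<notin> cdom P"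
  shows "pred_option is_val (lookupP P w)" and "x = w \<Longrightarrow> is_val u"
  using assms lookupP_eq_None[of x P] by (auto split: option.splits if_splits)

lemma un_Un_an: "un t \<union> an t = nv t"
proof (induction t)
  case (App t1 t2) then show ?case by (cases t1) auto
qed auto

lemma an_subset_nv: "an t \<subseteq> nv t"
  using un_Un_an by blast

lemma nv_r_eq_un_r_Un_an_r: "nv_r t R = un_r t R \<union> an_r t R"
proof (induction R)
  case Nil then show ?case using un_Un_an by simp
next
  case (Cons a R)
  then show ?case using un_Un_an[of "snd a"] by (cases a; cases "snd a") (auto split: if_splits)
qed

lemma nvp_eq_unp_Un_anp: "nvp p = unp p \<union> anp p"
  by (simp add: nvp_def unp_def anp_def nv_r_eq_un_r_Un_an_r)

lemma anp_subset_nvp: "anp p \<subseteq> nvp p"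
  and unp_subset_nvp: "unp p \<subseteq> nvp p"
  using nvp_eq_unp_Un_anp by blast+

lemma nvp_Nil [simp]: "nvp (t, []) = nv t" by (simp add: nvp_def)
lemma anp_Nil [simp]: "anp (t, []) = an t" by (simp add: anp_def)

lemma nvp_app_es [simp]:
  "nvp (app_es p x u) = (if x \<in> nvp p then (nvp p - {x}) \<union> nv u else nvp p)"
  by (simp add: nvp_def app_es_def)

lemma val_nv [simp]: "is_val v \<Longrightarrow> nv v = {}" by (cases v) auto
lemma val_an [simp]: "is_val v \<Longrightarrow> an v = {}" by (cases v) auto

text \<open>The sets of a context after appending \<open>[x\<leftarrow>u]\<close> by one of the rules of \<open>\<M>\<close> and \<open>\<X>\<close>
  for variables, garbage, non-variable inert terms and values; \<open>stable_es (U \<union> A) A x u\<close> is the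
  side condition under which one of these rules applies.\<close>

definition un_es :: "var set \<Rightarrow> var set \<Rightarrow> var \<Rightarrow> trm \<Rightarrow> var set" where
  "un_es U A x u = (if x \<notin> U \<union> A then U else case u of Var y \<Rightarrow> upd U x y | _ \<Rightarrow> (U - {x}) \<union> un u)"

definition an_es :: "var set \<Rightarrow> var set \<Rightarrow> var \<Rightarrow> trm \<Rightarrow> var set" where
  "an_es U A x u = (if x \<notin> U \<union> A then A else case u of Var y \<Rightarrow> upd A x y | _ \<Rightarrow> (A - {x}) \<union> an u)"

definition stable_es :: "var set \<Rightarrow> var set \<Rightarrow> var \<Rightarrow> trm \<Rightarrow> bool" where
  "stable_es N A x u \<longleftrightarrow> (x \<in> N \<longrightarrow> fireball u) \<and> (x \<in> A \<longrightarrow> \<not> is_val u)"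

lemma un_es_Var [simp]: "un_es U A x (Var y) = (if x \<in> U \<union> A then upd U x y else U)"
  and an_es_Var [simp]: "an_es U A x (Var y) = (if x \<in> U \<union> A then upd A x y else A)"
  by (simp_all add: un_es_def an_es_def)

lemma an_es_not_var: "\<not> is_var u \<Longrightarrow> an_es U A x u = (if x \<in> U \<union> A then (A - {x}) \<union> an u else A)"
  by (cases u) (simp_all add: an_es_def)

lemma un_es_val [simp]: "is_val v \<Longrightarrow> un_es U A x v = (if x \<in> U \<union> A then U - {x} else U)"
  and an_es_val [simp]: "is_val v \<Longrightarrow> an_es U A x v = (if x \<in> U \<union> A then A - {x} else A)"
  by (cases v; simp add: un_es_def an_es_def)+

lemma un_es_Un_an_es:
  "un_es U A x u \<union> an_es U A x u = (if x \<in> U \<union> A then (U \<union> A - {x}) \<union> nv u else U \<union> A)"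
  using un_Un_an[of u] by (cases u) (auto simp: un_es_def an_es_def upd_def)

lemma an_es_lower: "x \<in> U \<union> A \<Longrightarrow> (A - {x}) \<union> an u \<subseteq> an_es U A x u"
  by (cases u) (auto simp: an_es_def upd_def)

lemma an_es_superset: "A - {x} \<subseteq> an_es U A x u"
  by (cases u) (auto simp: an_es_def upd_def)

lemma an_es_Un_left [simp]: "an_es (U \<union> A) A x u = an_es U A x u"
  by (simp add: an_es_def)

lemma un_es_Un_left_Un_an_es [simp]:
  "un_es (U \<union> A) A x u \<union> an_es U A x u = un_es U A x u \<union> an_es U A x u"
  using un_es_Un_an_es[of "U \<union> A" A x u] un_es_Un_an_es[of U A x u] by auto

lemma nv_es_mono:
  "U \<union> A \<subseteq> U' \<union> A' \<Longrightarrow> un_es U A x u \<union> an_es U A x u \<subseteq> un_es U' A' x u \<union> an_es U' A' x u"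
  by (auto simp: un_es_Un_an_es)

lemma an_es_mono: "U \<union> A \<subseteq> U' \<union> A' \<Longrightarrow> A \<subseteq> A' \<Longrightarrow> an_es U A x u \<subseteq> an_es U' A' x u"
  by (cases u) (auto simp: an_es_def upd_def)

lemma stable_es_mono: "stable_es N A x u \<Longrightarrow> N' \<subseteq> N \<Longrightarrow> A' \<subseteq> A \<Longrightarrow> stable_es N' A' x u"
  by (auto simp: stable_es_def)

lemma unp_app_es [simp]: "unp (app_es p x u) = un_es (unp p) (anp p) x u"
  using nvp_eq_unp_Un_anp[of p]
  by (cases u) (auto simp: unp_def anp_def nvp_def app_es_def un_es_def upd_def)

lemma anp_app_es [simp]: "anp (app_es p x u) = an_es (unp p) (anp p) x u"
  using nvp_eq_unp_Un_anp[of p]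
  by (cases u) (auto simp: unp_def anp_def nvp_def app_es_def an_es_def upd_def)

fun is_redex :: "trm \<Rightarrow> bool" where
  "is_redex (App (Lam x t) u) = True" | "is_redex _ = False"

lemma inert_App_iff: "inert (App a b) \<longleftrightarrow> inert a \<and> fireball b"
  by (auto simp: fireball_def elim: inert.cases intro: inert.intros)

lemma not_inert_Lam [simp]: "\<not> inert (Lam x t)"
  by (auto elim: inert.cases)

lemma inert_not_val: "inert i \<Longrightarrow> \<not> is_val i"
  by (auto elim: inert.cases)

lemma fireball_Var [simp]: "fireball (Var x)"
  by (simp add: fireball_def inert.intros)

lemma fireball_cases: "fireball u \<Longrightarrow> is_var u \<or> inert_plus u \<or> is_val u"
  by (auto simp: fireball_def inert_plus_def)

lemma fireball_plugC_not_redex: "fireball (plugC C s) \<Longrightarrow> \<not> is_redex s"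
proof (induction C)
  case Hole then show ?case
    by (cases s rule: is_redex.cases) (auto simp: fireball_def inert_App_iff)
qed (auto simp: fireball_def inert_App_iff)

lemma not_fireball_redex: "\<not> fireball t \<Longrightarrow> \<exists>H r. isH H \<and> plugC H r = t \<and> is_redex r"
proof (induction t)
  case (App t1 t2)
  show ?case
  proof (cases "fireball t1")
    case False
    then obtain H r where "isH H" "plugC H r = t1" "is_redex r" using App.IH(1) by blast
    then show ?thesis by (intro exI[of _ "CAppL H t2"] exI[of _ r]) (auto intro: isH.intros)
  next
    case True
    show ?thesis
    proof (cases "is_val t1")
      case True
      then show ?thesis
        by (intro exI[of _ Hole] exI[of _ "App t1 t2"]) (cases t1; auto intro: isH.intros)
    next
      case False
      with \<open>fireball t1\<close> have "inert t1" by (simp add: fireball_def)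
      moreover obtain H r where "isH H" "plugC H r = t2" "is_redex r"
        using App calculation by (auto simp: fireball_def inert_App_iff)
      ultimately show ?thesis by (intro exI[of _ "CAppR t1 H"] exI[of _ r]) (auto intro: isH.intros)
    qed
  qed
qed (auto simp: fireball_def inert.intros)

lemma nv_plugC_Var: "w \<in> nv (plugC C (Var w))"
  by (induction C) auto

lemma ctx_an_subset_an: "ctx_an C \<subseteq> an (plugC C s)"
proof (induction C)
  case (CAppL C t) then show ?case by (cases "plugC C s") auto
next
  case (CAppR t C) then show ?case by (cases t) auto
qed auto

lemma ctx_un_subset_nv: "ctx_un C \<subseteq> nv (plugC C s)"
proof (induction C)
  case (CAppR t C) then show ?case using un_Un_an[of t] by auto
qed auto

lemma isHa_isH: "isHa H \<Longrightarrow> isH H"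
  by (induction rule: isHa.induct) (auto intro: isH.intros)

lemma isHa_plugC_App: "isHa H \<Longrightarrow> \<exists>a b. plugC H s = App a b"
  by (induction rule: isHa.induct) auto

lemma isHa_an_plugC: "isHa H \<Longrightarrow> w \<in> an (plugC H (Var w))"
proof (induction rule: isHa.induct)
  case (2 H t) then show ?case using isHa_plugC_App[OF 2(1), of "Var w"] by auto
next
  case (3 i H) then show ?case by (cases i) auto
qed auto

lemma inert_focus_H:
  "inert i \<Longrightarrow> x \<in> nv i \<Longrightarrow> \<exists>H. isH H \<and> plugC H (Var x) = i \<and> x \<notin> ctx_un H \<union> ctx_an H"
proof (induction i)
  case Var
  then show ?case by (intro exI[of _ Hole]) (auto intro: isH.intros)
next
  case (App i f)
  have i: "inert i" and f: "fireball f" using App.prems(1) by (auto simp: inert_App_iff)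
  show ?case
  proof (cases "x \<in> nv i")
    case True
    then obtain H where "isH H" "plugC H (Var x) = i" "x \<notin> ctx_un H \<union> ctx_an H"
      using App.IH(1) i by blast
    then show ?thesis by (intro exI[of _ "CAppL H f"]) (auto intro: isH.intros)
  next
    case False
    then have "x \<in> nv f" using App.prems by auto
    then have "inert f" using f by (auto simp: fireball_def)
    then obtain H where "isH H" "plugC H (Var x) = f" "x \<notin> ctx_un H \<union> ctx_an H"
      using App.IH(2) \<open>x \<in> nv f\<close> by blast
    then show ?thesis using False i un_Un_an[of i]
      by (intro exI[of _ "CAppR i H"]) (auto intro: isH.intros)
  qed
qed auto

lemma inert_focus_Ha:
  "inert i \<Longrightarrow> S \<inter> an i \<noteq> {} \<Longrightarrow> \<exists>x\<in>S. \<exists>H. isHa H \<and> plugC H (Var x) = i \<and> S \<inter> ctx_an H = {}"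
proof (induction i)
  case (App i f)
  have i: "inert i" and f: "fireball f" using App.prems(1) by (auto simp: inert_App_iff)
  have in_f: ?case if Sf: "S \<inter> an f \<noteq> {}" and Si: "S \<inter> an i = {}"
  proof -
    have "inert f" using f Sf by (auto simp: fireball_def)
    then obtain x H where "x \<in> S" "isHa H" "plugC H (Var x) = f" "S \<inter> ctx_an H = {}"
      using App.IH(2) Sf by blast
    then show ?thesis using i Si by (intro bexI[of _ x] exI[of _ "CAppR i H"]) (auto intro: isHa.intros)
  qed
  show ?case
  proof (cases i)
    case (Var y)
    show ?thesis
    proof (cases "y \<in> S")
      case True
      then show ?thesis using Var by (intro bexI[of _ y] exI[of _ "CAppL Hole f"]) (auto intro: isHa.intros)
    next
      case False
      then show ?thesis using App.prems Var in_f by auto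
    qed
  next
    case Lam
    then show ?thesis using i by simp
  next
    case App
    then have an: "an (App i f) = an i \<union> an f" by simp
    show ?thesis
    proof (cases "S \<inter> an i = {}")
      case True
      then show ?thesis using App.prems an in_f by auto
    next
      case False
      then obtain x H where "x \<in> S" "isHa H" "plugC H (Var x) = i" "S \<inter> ctx_an H = {}"
        using App.IH(1) i by blast
      then show ?thesis by (intro bexI[of _ x] exI[of _ "CAppL H f"]) (auto intro: isHa.intros)
    qed
  qed
qed auto

lemma isH_refocus:
  assumes "isH H" and "x \<in> ctx_un H \<union> ctx_an H"
  shows "\<exists>H'. isH H' \<and> plugC H' (Var x) = plugC H s \<and> x \<notin> ctx_un H' \<union> ctx_an H' \<and>
    ctx_un H' \<union> ctx_an H' \<subseteq> ctx_un H \<union> ctx_an H \<and> ctx_an H' \<subseteq> ctx_an H"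
  using assms
proof (induction rule: isH.induct)
  case (2 H t)
  then obtain H' where "isH H'" "plugC H' (Var x) = plugC H s" "x \<notin> ctx_un H' \<union> ctx_an H'"
    "ctx_un H' \<union> ctx_an H' \<subseteq> ctx_un H \<union> ctx_an H" "ctx_an H' \<subseteq> ctx_an H" by auto
  then show ?case by (intro exI[of _ "CAppL H' t"]) (auto intro: isH.intros)
next
  case (3 i H)
  show ?case
  proof (cases "x \<in> nv i")
    case True
    then obtain H' where H': "isH H'" "plugC H' (Var x) = i" "x \<notin> ctx_un H' \<union> ctx_an H'"
      using inert_focus_H[OF 3(1)] by blast
    have "ctx_un H' \<subseteq> nv i" "ctx_an H' \<subseteq> an i"
      using ctx_un_subset_nv[of H' "Var x"] ctx_an_subset_an[of H' "Var x"] H'(2) by auto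
    then show ?thesis using H' un_Un_an[of i]
      by (intro exI[of _ "CAppL H' (plugC H s)"]) (auto intro: isH.intros)
  next
    case False
    then obtain H' where "isH H'" "plugC H' (Var x) = plugC H s" "x \<notin> ctx_un H' \<union> ctx_an H'"
      "ctx_un H' \<union> ctx_an H' \<subseteq> ctx_un H \<union> ctx_an H" "ctx_an H' \<subseteq> ctx_an H"
      using 3 un_Un_an[of i] by auto
    then show ?thesis using False 3(1) un_Un_an[of i]
      by (intro exI[of _ "CAppR i H'"]) (auto intro: isH.intros)
  qed
qed simp

lemma isH_refocus_Ha:
  assumes "isH H" and "S \<subseteq> ctx_an H" and "S \<noteq> {}"
  shows "\<exists>x\<in>S. \<exists>H'. isHa H' \<and> plugC H' (Var x) = plugC H s \<and> S \<inter> ctx_an H' = {} \<and>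
    ctx_un H' \<union> ctx_an H' \<subseteq> ctx_un H \<union> ctx_an H \<and> ctx_an H' \<subseteq> ctx_an H"
  using assms
proof (induction rule: isH.induct)
  case (2 H t)
  then obtain x H' where "x \<in> S" "isHa H'" "plugC H' (Var x) = plugC H s" "S \<inter> ctx_an H' = {}"
    "ctx_un H' \<union> ctx_an H' \<subseteq> ctx_un H \<union> ctx_an H" "ctx_an H' \<subseteq> ctx_an H" by auto
  then show ?case by (intro bexI[of _ x] exI[of _ "CAppL H' t"]) (auto intro: isHa.intros)
next
  case (3 i H)
  show ?case
  proof (cases "S \<inter> an i = {}")
    case False
    then obtain x H' where H': "x \<in> S" "isHa H'" "plugC H' (Var x) = i" "S \<inter> ctx_an H' = {}"
      using inert_focus_Ha[OF 3(1)] by blast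
    have "ctx_un H' \<subseteq> nv i" "ctx_an H' \<subseteq> an i"
      using ctx_un_subset_nv[of H' "Var x"] ctx_an_subset_an[of H' "Var x"] H'(3) by auto
    then show ?thesis using H' un_Un_an[of i]
      by (intro bexI[of _ x] exI[of _ "CAppL H' (plugC H s)"]) (auto intro: isHa.intros)
  next
    case True
    then have "S \<subseteq> ctx_an H" using 3(4) by auto
    then obtain x H' where "x \<in> S" "isHa H'" "plugC H' (Var x) = plugC H s" "S \<inter> ctx_an H' = {}"
      "ctx_un H' \<union> ctx_an H' \<subseteq> ctx_un H \<union> ctx_an H" "ctx_an H' \<subseteq> ctx_an H"
      using 3(3,5) by blast
    then show ?thesis using True 3(1) un_Un_an[of i]
      by (intro bexI[of _ x] exI[of _ "CAppR i H'"]) (auto intro: isHa.intros)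
  qed
qed simp

section \<open>Multiplicative and exponential contexts\<close>

lemma isM_appP:
  assumes "isM P U A" and "x \<notin> cdom P" and "stable_es (U \<union> A) A x u"
  shows "isM (appP P x u) (un_es U A x u) (an_es U A x u)"
proof (cases "x \<in> U \<union> A")
  case False
  then show ?thesis using M_gc[OF assms(1,2) False] by (simp add: un_es_def an_es_def)
next
  case True
  then consider y where "u = Var y" | "inert_plus u" | "is_val u" "x \<in> U - A"
    using assms(3) fireball_cases[of u] by (cases u) (auto simp: stable_es_def)
  then show ?thesis
  proof cases
    case 1
    then show ?thesis using M_var[OF assms(1,2) True] True by (simp add: un_es_def an_es_def)
  next
    case 2
    then have "\<not> is_var u" by (simp add: inert_plus_def)
    then show ?thesis using M_inert[OF assms(1,2) True 2] True
      by (cases u) (simp_all add: un_es_def an_es_def)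
  next
    case 3
    then show ?thesis using M_val[OF assms(1,2) 3(2,1)] True
      by (cases u) (auto simp: un_es_def an_es_def)
  qed
qed

lemma isX_appP:
  assumes "isX P U A" and "x \<notin> cdom P" and "stable_es (U \<union> A) A x u"
  shows "isX (appP P x u) (un_es U A x u) (an_es U A x u)"
proof (cases "x \<in> U \<union> A")
  case False
  then show ?thesis using X_gc[OF assms(1,2) False] by (simp add: un_es_def an_es_def)
next
  case True
  then consider y where "u = Var y" | "inert_plus u" | "is_val u" "x \<in> U - A"
    using assms(3) fireball_cases[of u] by (cases u) (auto simp: stable_es_def)
  then show ?thesis
  proof cases
    case 1
    then show ?thesis using X_var[OF assms(1,2) True] True by (simp add: un_es_def an_es_def)
  next
    case 2
    then have "\<not> is_var u" by (simp add: inert_plus_def)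
    then show ?thesis using X_inert[OF assms(1,2) True 2] True
      by (cases u) (simp_all add: un_es_def an_es_def)
  next
    case 3
    then show ?thesis using X_val[OF assms(1,2) 3(2,1)] True
      by (cases u) (auto simp: un_es_def an_es_def)
  qed
qed

lemma isM_NilE:
  assumes "isM P U A" and "plugP P (s, []) = (t, [])"
  obtains H where "isH H" "P = PC H []" "plugC H s = t" "U = ctx_un H" "A = ctx_an H"
  using assms by (cases rule: isM.cases) auto

lemma isX_NilE:
  assumes "isX P U A" and "plugP P (s, []) = (t, [])"
  obtains H where "isHa H" "P = PC H []" "plugC H s = t" "U = ctx_un H" "A = ctx_an H"
  using assms by (cases rule: isX.cases) auto

lemma isM_app_esE:
  assumes "isM P' U' A'" and "plugP P' (s, []) = app_es p x u"
  obtains (es) P U A where "isM P U A" "plugP P (s, []) = p" "P' = appP P x u" "x \<notin> pdom p"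
      "stable_es (U \<union> A) A x u" "U' = un_es U A x u" "A' = an_es U A x u"
    | (hole) P U A H where "isM P U A" "plugP P (Var x, []) = p" "P' = appC p x H" "x \<notin> pdom p"
      "x \<notin> U \<union> A" "isH H" "u = plugC H s" "U' = U \<union> ctx_un H" "A' = A \<union> ctx_an H"
  using assms(1)
proof cases
  case (M_var P U A y z)
  then show ?thesis using assms(2)
    by (intro es[of P U A]) (auto simp: un_es_def an_es_def stable_es_def)
next
  case (M_gc P y t)
  then show ?thesis using assms(2)
    by (intro es[of P U' A']) (auto simp: un_es_def an_es_def stable_es_def)
next
  case (M_inert P U A y i)
  then show ?thesis using assms(2) inert_not_val[of i]
    by (intro es[of P U A]) (auto simp: un_es_def an_es_def stable_es_def inert_plus_def
        fireball_def split: trm.split)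
next
  case (M_val P U y v)
  then show ?thesis using assms(2)
    by (intro es[of P U A']) (auto simp: stable_es_def fireball_def)
next
  case (M_hole P U A y H)
  then show ?thesis using assms(2) by (intro hole[of P U A H]) auto
qed (use assms(2) in simp)

lemma isX_app_esE:
  assumes "isX P' U' A'" and "plugP P' (s, []) = app_es p x u"
  obtains (es) P U A where "isX P U A" "plugP P (s, []) = p" "P' = appP P x u" "x \<notin> pdom p"
      "stable_es (U \<union> A) A x u" "U' = un_es U A x u" "A' = an_es U A x u"
    | (fromM) P U A H where "isM P U A" "plugP P (Var x, []) = p" "P' = appC p x H" "x \<notin> pdom p"
      "x \<notin> U \<union> A" "isHa H" "u = plugC H s" "U' = U \<union> ctx_un H" "A' = A \<union> ctx_an H"
    | (hole) P U A where "isX P U A" "plugP P (Var x, []) = p" "P' = appC p x Hole" "x \<notin> pdom p"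
      "x \<notin> A" "u = s" "U' = U - {x}" "A' = A"
  using assms(1)
proof cases
  case (X_fromM P U A y H)
  then show ?thesis using assms(2) by (intro fromM[of P U A H]) auto
next
  case (X_var P U A y z)
  then show ?thesis using assms(2)
    by (intro es[of P U A]) (auto simp: un_es_def an_es_def stable_es_def)
next
  case (X_inert P U A y i)
  then show ?thesis using assms(2) inert_not_val[of i]
    by (intro es[of P U A]) (auto simp: un_es_def an_es_def stable_es_def inert_plus_def
        fireball_def split: trm.split)
next
  case (X_gc P y t)
  then show ?thesis using assms(2)
    by (intro es[of P U' A']) (auto simp: un_es_def an_es_def stable_es_def)
next
  case (X_val P U y v)
  then show ?thesis using assms(2)
    by (intro es[of P U A']) (auto simp: stable_es_def fireball_def)
next
  case (X_hole P U y)
  then show ?thesis using assms(2) by (intro hole[of P U A']) auto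
qed (use assms(2) in simp)

lemma isM_hole_in_nvp:
  "isM P U A \<Longrightarrow> plugP P (Var w, []) = p \<Longrightarrow> w \<notin> pdom p \<Longrightarrow> w \<in> nvp p"
proof (induction p arbitrary: P U A w rule: prog_induct)
  case (Nil t)
  then show ?case using nv_plugC_Var by (auto elim: isM_NilE)
next
  case (app_es p x u)
  from app_es.prems(1,2) show ?case
  proof (cases rule: isM_app_esE)
    case (es P0 U0 A0)
    then have "w \<in> nvp p" using app_es.IH[of P0 U0 A0 w] app_es.prems(3) by simp
    then show ?thesis using app_es.prems(3) by simp
  next
    case (hole P0 U0 A0 H)
    have "x \<in> nvp p" using app_es.IH[of P0 U0 A0 x] hole(1,2,4) by blast
    then show ?thesis using hole(7) nv_plugC_Var[of w H] by simp
  qed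
qed

lemma isX_hole_in_anp:
  "isX P U A \<Longrightarrow> plugP P (Var w, []) = p \<Longrightarrow> w \<notin> pdom p \<Longrightarrow> w \<in> anp p"
proof (induction p arbitrary: P U A w rule: prog_induct)
  case (Nil t)
  then show ?case using isHa_an_plugC by (auto elim: isX_NilE)
next
  case (app_es p x u)
  from app_es.prems(1,2) show ?case
  proof (cases rule: isX_app_esE)
    case (es P0 U0 A0)
    then have "w \<in> anp p - {x}" using app_es.IH[of P0 U0 A0 w] app_es.prems(3) by simp
    then show ?thesis using an_es_superset[of "anp p" x "unp p" u] by auto
  next
    case (fromM P0 U0 A0 H)
    have "x \<in> unp p \<union> anp p"
      using isM_hole_in_nvp[OF fromM(1,2,4)] nvp_eq_unp_Un_anp by blast
    then show ?thesis
      using an_es_lower[of x "unp p" "anp p" u] fromM(6,7) isHa_an_plugC[of H w] by auto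
  next
    case (hole P0 U0 A0)
    have "x \<in> anp p" using app_es.IH[of P0 U0 A0 x] hole(1,2,4) by blast
    then show ?thesis using hole(6) nvp_eq_unp_Un_anp[of p] by (simp add: upd_def)
  qed
qed

lemma sets_subset_app_es:
  assumes "U \<union> A \<subseteq> nvp p" and "A \<subseteq> anp p"
  shows "un_es U A x u \<union> an_es U A x u \<subseteq> nvp (app_es p x u) \<and> an_es U A x u \<subseteq> anp (app_es p x u)"
proof -
  have "U \<union> A \<subseteq> unp p \<union> anp p" using assms(1) nvp_eq_unp_Un_anp by blast
  from nv_es_mono[OF this] an_es_mono[OF this assms(2)] show ?thesis
    unfolding nvp_eq_unp_Un_anp[of "app_es p x u"] unp_app_es anp_app_es by blast
qed

lemma sets_subset_app_es_hole:
  assumes "U \<union> A \<subseteq> nvp p" and "A \<subseteq> anp p" and "x \<in> nvp p" and "x \<notin> U \<union> A"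
  shows "U \<union> A \<union> ctx_un H \<union> ctx_an H \<subseteq> nvp (app_es p x (plugC H s)) \<and>
    A \<union> ctx_an H \<subseteq> anp (app_es p x (plugC H s))"
proof -
  have x: "x \<in> unp p \<union> anp p" using assms(3) nvp_eq_unp_Un_anp by blast
  have "ctx_un H \<union> ctx_an H \<subseteq> nv (plugC H s)" "ctx_an H \<subseteq> an (plugC H s)"
    using ctx_un_subset_nv[of H s] ctx_an_subset_an[of H s] an_subset_nv[of "plugC H s"] by auto
  then show ?thesis
    using assms an_es_lower[OF x, of "plugC H s"] by auto
qed

lemma isM_sets_subset:
  "isM P U A \<Longrightarrow> plugP P (s, []) = p \<Longrightarrow> U \<union> A \<subseteq> nvp p \<and> A \<subseteq> anp p"
proof (induction p arbitrary: P U A s rule: prog_induct)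
  case (Nil t)
  then obtain H where "plugC H s = t" "U = ctx_un H" "A = ctx_an H" by (elim isM_NilE)
  then show ?case using ctx_un_subset_nv[of H s] ctx_an_subset_an[of H s] an_subset_nv[of t] by auto
next
  case (app_es p x u)
  from app_es.prems show ?case
  proof (cases rule: isM_app_esE)
    case (es P0 U0 A0)
    then show ?thesis using sets_subset_app_es app_es.IH[OF es(1,2)] by simp
  next
    case (hole P0 U0 A0 H)
    then show ?thesis
      using sets_subset_app_es_hole[of U0 A0 p x H s] app_es.IH[OF hole(1,2)]
        isM_hole_in_nvp[OF hole(1,2,4)] by (simp add: Un_assoc)
  qed
qed

lemma isX_sets_subset:
  "isX P U A \<Longrightarrow> plugP P (s, []) = p \<Longrightarrow> U \<union> A \<subseteq> nvp p \<and> A \<subseteq> anp p"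
proof (induction p arbitrary: P U A s rule: prog_induct)
  case (Nil t)
  then obtain H where "plugC H s = t" "U = ctx_un H" "A = ctx_an H" by (elim isX_NilE)
  then show ?case using ctx_un_subset_nv[of H s] ctx_an_subset_an[of H s] an_subset_nv[of t] by auto
next
  case (app_es p x u)
  from app_es.prems show ?case
  proof (cases rule: isX_app_esE)
    case (es P0 U0 A0)
    then show ?thesis using sets_subset_app_es app_es.IH[OF es(1,2)] by simp
  next
    case (fromM P0 U0 A0 H)
    then show ?thesis
      using sets_subset_app_es_hole[of U0 A0 p x H s] isM_sets_subset[OF fromM(1,2)]
        isM_hole_in_nvp[OF fromM(1,2,4)] by (simp add: Un_assoc)
  next
    case (hole P0 U0 A0)
    have "U0 \<union> A0 \<subseteq> nvp p" "A0 \<subseteq> anp p" using app_es.IH[OF hole(1,2)] by auto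
    then show ?thesis using hole(5,7,8) an_es_superset[of "anp p" x "unp p" u] by auto
  qed
qed

section \<open>Refocusing contexts\<close>

text \<open>\<open>M_focus p x N A\<close>: \<open>p = P\<langle>x\<rangle>\<close> for a multiplicative context \<open>P\<close> that does not need \<open>x\<close>
  itself, as required to extend \<open>P\<close> into an ES \<open>[x\<leftarrow>u]\<close>; its sets are bounded by \<open>N\<close> and \<open>A\<close>.
  \<open>X_focus\<close> is the exponential analogue for some variable of a set \<open>S\<close>, whose applied variables
  avoid \<open>S\<close>: a single variable does not suffice, since a renaming \<open>[y\<leftarrow>z]\<close> can pass the role
  of \<open>z\<close> to \<open>y\<close>.\<close>

definition M_focus :: "prog \<Rightarrow> var \<Rightarrow> var set \<Rightarrow> var set \<Rightarrow> bool" where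
  "M_focus p x N A \<longleftrightarrow> (\<exists>P U' A'. isM P U' A' \<and> plugP P (Var x, []) = p \<and> x \<notin> U' \<union> A' \<and>
     U' \<union> A' \<subseteq> N \<and> A' \<subseteq> A)"

definition X_focus :: "prog \<Rightarrow> var set \<Rightarrow> var set \<Rightarrow> var set \<Rightarrow> bool" where
  "X_focus p S N A \<longleftrightarrow> (\<exists>x\<in>S. \<exists>P U' A'. isX P U' A' \<and> plugP P (Var x, []) = p \<and> S \<inter> A' = {} \<and>
     U' \<union> A' \<subseteq> N \<and> A' \<subseteq> A)"

lemma M_focusI: "isM P U A \<Longrightarrow> plugP P (Var x, []) = p \<Longrightarrow> x \<notin> U \<union> A \<Longrightarrow> M_focus p x (U \<union> A) A"
  unfolding M_focus_def by blast

lemma M_focusE: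
  assumes "M_focus p x N A"
  obtains P U' A' where "isM P U' A'" "plugP P (Var x, []) = p" "x \<notin> U' \<union> A'" "U' \<union> A' \<subseteq> N" "A' \<subseteq> A"
  using assms unfolding M_focus_def by blast

lemma M_focus_mono: "M_focus p x N A \<Longrightarrow> N \<subseteq> N' \<Longrightarrow> A \<subseteq> A' \<Longrightarrow> M_focus p x N' A'"
  unfolding M_focus_def by blast

lemma X_focusI:
  "x \<in> S \<Longrightarrow> isX P U A \<Longrightarrow> plugP P (Var x, []) = p \<Longrightarrow> S \<inter> A = {} \<Longrightarrow> X_focus p S (U \<union> A) A"
  unfolding X_focus_def by blast

lemma X_focusE:
  assumes "X_focus p S N A"
  obtains x P U' A' where "x \<in> S" "isX P U' A'" "plugP P (Var x, []) = p" "S \<inter> A' = {}"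
    "U' \<union> A' \<subseteq> N" "A' \<subseteq> A"
  using assms unfolding X_focus_def by blast

lemma X_focus_mono: "X_focus p S N A \<Longrightarrow> N \<subseteq> N' \<Longrightarrow> A \<subseteq> A' \<Longrightarrow> X_focus p S N' A'"
  unfolding X_focus_def by blast

lemma M_focus_base:
  assumes "isH H" and "x \<in> ctx_un H \<union> ctx_an H"
  shows "M_focus (plugC H s, []) x (ctx_un H \<union> ctx_an H) (ctx_an H)"
proof -
  obtain H' where "isH H'" "plugC H' (Var x) = plugC H s" "x \<notin> ctx_un H' \<union> ctx_an H'"
    "ctx_un H' \<union> ctx_an H' \<subseteq> ctx_un H \<union> ctx_an H" "ctx_an H' \<subseteq> ctx_an H"
    using isH_refocus[OF assms] by blast
  then show ?thesis using M_focusI[OF M_base, of H' x] M_focus_mono by fastforce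
qed

lemma X_focus_base:
  assumes "isH H" and "S \<subseteq> ctx_an H" and "S \<noteq> {}"
  shows "X_focus (plugC H s, []) S (ctx_un H \<union> ctx_an H) (ctx_an H)"
proof -
  obtain x H' where "x \<in> S" "isHa H'" "plugC H' (Var x) = plugC H s" "S \<inter> ctx_an H' = {}"
    "ctx_un H' \<union> ctx_an H' \<subseteq> ctx_un H \<union> ctx_an H" "ctx_an H' \<subseteq> ctx_an H"
    using isH_refocus_Ha[OF assms] by blast
  then show ?thesis using X_focusI[OF _ X_base, of x S H'] X_focus_mono by fastforce
qed

lemma es_lower_bounds:
  assumes "y \<in> N"
  shows "N - {y} \<union> nv u \<subseteq> un_es N A y u \<union> an_es N A y u" and "A - {y} \<union> an u \<subseteq> an_es N A y u"
  using assms an_es_lower[of y N A u] by (auto simp: un_es_Un_an_es)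

lemma M_focus_app_es_extend:
  assumes "isM P U' A'" and "plugP P (Var x, []) = p" and "x \<notin> U' \<union> A'"
    and "U' \<union> A' \<subseteq> N" and "A' \<subseteq> A" and "y \<notin> pdom p" and "x \<noteq> y"
    and "stable_es N A y u" and "y \<in> U' \<union> A' \<Longrightarrow> x \<notin> nv u"
  shows "M_focus (app_es p y u) x (un_es N A y u \<union> an_es N A y u) (an_es N A y u)"
proof -
  have "y \<notin> cdom P" using assms(2,6) by auto
  moreover have "stable_es (U' \<union> A') A' y u" using assms(8,4,5) by (rule stable_es_mono)
  moreover have "x \<notin> un_es U' A' y u \<union> an_es U' A' y u"
    using assms(3,7,9) by (simp add: un_es_Un_an_es)
  ultimately have "M_focus (plugP (appP P y u) (Var x, [])) x
      (un_es U' A' y u \<union> an_es U' A' y u) (an_es U' A' y u)"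
    using M_focusI[OF isM_appP[OF assms(1)] refl] by blast
  then have F: "M_focus (app_es p y u) x (un_es U' A' y u \<union> an_es U' A' y u) (an_es U' A' y u)"
    using assms(2) by simp
  have sub: "U' \<union> A' \<subseteq> N \<union> A" using assms(4) by blast
  show ?thesis by (rule M_focus_mono[OF F nv_es_mono[OF sub] an_es_mono[OF sub assms(5)]])
qed

lemma X_focus_app_es_extend:
  assumes "isX P U' A'" and "plugP P (Var x, []) = p" and "x \<in> S"
    and "U' \<union> A' \<subseteq> N" and "A' \<subseteq> A" and "y \<notin> pdom p"
    and "stable_es N A y u" and "S \<inter> an_es U' A' y u = {}"
  shows "X_focus (app_es p y u) S (un_es N A y u \<union> an_es N A y u) (an_es N A y u)"
proof -
  have "y \<notin> cdom P" using assms(2,6) by auto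
  moreover have "stable_es (U' \<union> A') A' y u" using assms(7,4,5) by (rule stable_es_mono)
  ultimately have "X_focus (plugP (appP P y u) (Var x, [])) S
      (un_es U' A' y u \<union> an_es U' A' y u) (an_es U' A' y u)"
    using X_focusI[OF assms(3) isX_appP[OF assms(1)] refl assms(8)] by blast
  then have F: "X_focus (app_es p y u) S (un_es U' A' y u \<union> an_es U' A' y u) (an_es U' A' y u)"
    using assms(2) by simp
  have sub: "U' \<union> A' \<subseteq> N \<union> A" using assms(4) by blast
  show ?thesis by (rule X_focus_mono[OF F nv_es_mono[OF sub] an_es_mono[OF sub assms(5)]])
qed

lemma M_focus_app_es_inert:
  assumes "isM P U' A'" and "plugP P (Var y, []) = p" and "y \<notin> U' \<union> A'"
    and "U' \<union> A' \<subseteq> N" and "A' \<subseteq> A" and "y \<notin> pdom p" and "y \<in> N"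
    and "stable_es N A y u" and "x \<in> nv u" and "x \<notin> U' \<union> A'"
  shows "M_focus (app_es p y u) x (un_es N A y u \<union> an_es N A y u) (an_es N A y u)"
proof -
  have "inert u" using assms(7-9) by (auto simp: stable_es_def fireball_def)
  then obtain H where H: "isH H" "plugC H (Var x) = u" "x \<notin> ctx_un H \<union> ctx_an H"
    using inert_focus_H assms(9) by blast
  have "y \<notin> cdom P" using assms(2,6) by auto
  then have "M_focus (plugP (appC (plugP P (Var y, [])) y H) (Var x, [])) x
      (U' \<union> ctx_un H \<union> (A' \<union> ctx_an H)) (A' \<union> ctx_an H)"
    using M_focusI[OF M_hole[OF assms(1) _ assms(3) H(1)] refl] assms(10) H(3) by blast
  then have F: "M_focus (app_es p y u) x (U' \<union> ctx_un H \<union> (A' \<union> ctx_an H)) (A' \<union> ctx_an H)"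
    using assms(2) H(2) by simp
  have "ctx_un H \<union> ctx_an H \<subseteq> nv u" "ctx_an H \<subseteq> an u"
    using H(2) ctx_un_subset_nv[of H "Var x"] ctx_an_subset_an[of H "Var x"] an_subset_nv[of u]
    by auto
  then show ?thesis
    using es_lower_bounds[OF assms(7), where u = u and A = A] assms(3-5)
    by (intro M_focus_mono[OF F]) auto
qed

lemma X_focus_app_es_inert:
  assumes "isM P U' A'" and "plugP P (Var y, []) = p" and "y \<notin> U' \<union> A'"
    and "U' \<union> A' \<subseteq> N" and "A' \<subseteq> A" and "y \<notin> pdom p" and "y \<in> N"
    and "stable_es N A y u" and "S \<inter> an u \<noteq> {}" and "S \<inter> A' = {}"
  shows "X_focus (app_es p y u) S (un_es N A y u \<union> an_es N A y u) (an_es N A y u)"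
proof -
  have "inert u" using assms(7-9) by (auto simp: stable_es_def fireball_def)
  then obtain x H where H: "x \<in> S" "isHa H" "plugC H (Var x) = u" "S \<inter> ctx_an H = {}"
    using inert_focus_Ha assms(9) by blast
  have "y \<notin> cdom P" using assms(2,6) by auto
  then have "X_focus (plugP (appC (plugP P (Var y, [])) y H) (Var x, [])) S
      (U' - {y} \<union> ctx_un H \<union> (A' \<union> ctx_an H)) (A' \<union> ctx_an H)"
    using X_focusI[OF H(1) X_fromM[OF assms(1) _ assms(3) H(2)] refl] assms(10) H(4) by blast
  then have F: "X_focus (app_es p y u) S (U' - {y} \<union> ctx_un H \<union> (A' \<union> ctx_an H)) (A' \<union> ctx_an H)"
    using assms(2) H(3) by simp
  have "ctx_un H \<union> ctx_an H \<subseteq> nv u" "ctx_an H \<subseteq> an u"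
    using H(3) ctx_un_subset_nv[of H "Var x"] ctx_an_subset_an[of H "Var x"] an_subset_nv[of u]
    by auto
  then show ?thesis
    using es_lower_bounds[OF assms(7), where u = u and A = A] assms(3-5)
    by (intro X_focus_mono[OF F]) auto
qed

lemma M_focus_app_es:
  assumes refocus: "\<And>P U' A' s z. isM P U' A' \<Longrightarrow> plugP P (s, []) = p \<Longrightarrow> z \<in> U' \<union> A' \<Longrightarrow>
      z \<notin> pdom p \<Longrightarrow> M_focus p z (U' \<union> A') A'"
    and focus: "\<And>z. z \<in> U \<union> A \<Longrightarrow> z \<notin> pdom p \<Longrightarrow> M_focus p z N A"
    and "U \<union> A \<subseteq> N" and stable: "stable_es N A y u" and "y \<notin> pdom p" and "x \<notin> pdom p"
    and "x \<noteq> y" and x: "x \<in> un_es U A y u \<union> an_es U A y u"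
  shows "M_focus (app_es p y u) x (un_es N A y u \<union> an_es N A y u) (an_es N A y u)"
proof -
  consider "x \<in> U \<union> A" | "x \<in> nv u" "y \<in> U \<union> A"
    using x by (auto simp: un_es_Un_an_es split: if_splits)
  then show ?thesis
  proof cases
    case 1
    then obtain P2 U2 A2 where P2: "isM P2 U2 A2" "plugP P2 (Var x, []) = p" "x \<notin> U2 \<union> A2"
      "U2 \<union> A2 \<subseteq> N" "A2 \<subseteq> A"
      using focus \<open>x \<notin> pdom p\<close> by (blast elim: M_focusE)
    show ?thesis
    proof (cases "y \<in> U2 \<union> A2 \<and> x \<in> nv u")
      case True
      then obtain P3 U3 A3 where "isM P3 U3 A3" "plugP P3 (Var y, []) = p" "y \<notin> U3 \<union> A3"
        "U3 \<union> A3 \<subseteq> U2 \<union> A2" "A3 \<subseteq> A2"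
        using refocus[OF P2(1,2)] \<open>y \<notin> pdom p\<close> by (blast elim: M_focusE)
      with P2(3-5) True show ?thesis
        using M_focus_app_es_inert[OF _ _ _ _ _ \<open>y \<notin> pdom p\<close> _ stable] by blast
    next
      case False
      then show ?thesis
        using M_focus_app_es_extend[OF P2 \<open>y \<notin> pdom p\<close> \<open>x \<noteq> y\<close> stable] by blast
    qed
  next
    case 2
    then obtain P3 U3 A3 where P3: "isM P3 U3 A3" "plugP P3 (Var y, []) = p" "y \<notin> U3 \<union> A3"
      "U3 \<union> A3 \<subseteq> N" "A3 \<subseteq> A"
      using focus \<open>y \<notin> pdom p\<close> by (blast elim: M_focusE)
    have "y \<in> N" using 2 \<open>U \<union> A \<subseteq> N\<close> by blast
    show ?thesis
    proof (cases "x \<in> U3 \<union> A3")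
      case False
      then show ?thesis
        using M_focus_app_es_inert[OF P3 \<open>y \<notin> pdom p\<close> \<open>y \<in> N\<close> stable 2(1)] by blast
    next
      case True
      then obtain P4 U4 A4 where P4: "isM P4 U4 A4" "plugP P4 (Var x, []) = p" "x \<notin> U4 \<union> A4"
        "U4 \<union> A4 \<subseteq> U3 \<union> A3" "A4 \<subseteq> A3"
        using refocus[OF P3(1,2)] \<open>x \<notin> pdom p\<close> by (blast elim: M_focusE)
      then have "y \<notin> U4 \<union> A4" "U4 \<union> A4 \<subseteq> N" "A4 \<subseteq> A" using P3(3-5) by auto
      then show ?thesis
        using M_focus_app_es_extend[OF P4(1-3) _ _ \<open>y \<notin> pdom p\<close> \<open>x \<noteq> y\<close> stable] by blast
    qed
  qed
qed

lemma X_focus_app_es_Var: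
  assumes "isX P U' A'" and "plugP P (Var y, []) = p" and "y \<notin> A'"
    and "U' \<union> A' \<subseteq> N" and "A' \<subseteq> A" and "y \<notin> pdom p" and "y \<in> N"
    and "z \<in> S" and "S \<inter> A' = {}"
  shows "X_focus (app_es p y (Var z)) S
    (un_es N A y (Var z) \<union> an_es N A y (Var z)) (an_es N A y (Var z))"
proof -
  have "y \<notin> cdom P" using assms(2,6) by auto
  from X_hole[OF assms(1) this assms(3)]
  have "X_focus (plugP (appC (plugP P (Var y, [])) y Hole) (Var z, [])) S (U' - {y} \<union> A') A'"
    by (rule X_focusI[OF assms(8) _ refl assms(9)])
  then have F: "X_focus (app_es p y (Var z)) S (U' - {y} \<union> A') A'" using assms(2) by simp
  show ?thesis
    using es_lower_bounds[OF assms(7), where u = "Var z" and A = A] assms(3-5)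
    by (intro X_focus_mono[OF F]) auto
qed

lemma X_focus_app_es_preimage:
  assumes focus: "\<And>S'. S' \<subseteq> A \<Longrightarrow> S' \<noteq> {} \<Longrightarrow> S' \<inter> pdom p = {} \<Longrightarrow> X_focus p S' N A"
    and "U \<union> A \<subseteq> N" and stable: "stable_es N A y u" and "y \<notin> pdom p"
    and an_u: "y \<in> N \<Longrightarrow> S \<inter> an u = {}"
    and S: "S \<subseteq> an_es U A y u" "S \<noteq> {}" "S \<inter> pdom (app_es p y u) = {}"
  shows "X_focus (app_es p y u) S (un_es N A y u \<union> an_es N A y u) (an_es N A y u)"
proof -
  have "y \<notin> S" and Sp: "S \<inter> pdom p = {}" using S(3) by auto
  \<comment> \<open>the preimage of \<open>S\<close> under the renaming \<open>[y\<leftarrow>u]\<close>, if \<open>u\<close> is a variable\<close>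
  define S0 where "S0 = {a \<in> A. a \<in> S \<or> (a = y \<and> is_var u \<and> S \<inter> nv u \<noteq> {})}"
  have S0: "S0 \<subseteq> A" "S0 \<noteq> {}" "S0 \<inter> pdom p = {}"
  proof -
    obtain s where "s \<in> S" using S(2) by blast
    moreover have "y \<in> U \<union> A \<Longrightarrow> S \<inter> an u = {}" using an_u \<open>U \<union> A \<subseteq> N\<close> by blast
    ultimately show "S0 \<noteq> {}"
      using S(1) \<open>y \<notin> S\<close>
      by (cases "y \<in> U \<union> A"; cases u) (auto simp: S0_def an_es_def upd_def split: if_splits)
  qed (use Sp \<open>y \<notin> pdom p\<close> in \<open>auto simp: S0_def\<close>)
  obtain x Pa Ua Aa where Pa: "x \<in> S0" "isX Pa Ua Aa" "plugP Pa (Var x, []) = p"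
    "S0 \<inter> Aa = {}" "Ua \<union> Aa \<subseteq> N" "Aa \<subseteq> A"
    using focus[OF S0] by (elim X_focusE)
  have SAa: "S \<inter> Aa = {}" using Pa(4,6) by (auto simp: S0_def)
  show ?thesis
  proof (cases "x = y")
    case True
    then obtain z where u: "u = Var z" and "z \<in> S" "y \<in> A"
      using Pa(1) \<open>y \<notin> S\<close> by (cases u) (auto simp: S0_def)
    have "y \<notin> Aa" "y \<in> N" using Pa(1,4) True \<open>y \<in> A\<close> \<open>U \<union> A \<subseteq> N\<close> by auto
    then show ?thesis
      using X_focus_app_es_Var[OF Pa(2) _ _ Pa(5,6) \<open>y \<notin> pdom p\<close> _ \<open>z \<in> S\<close> SAa] Pa(3) True u
      by blast
  next
    case False
    then have "x \<in> S" using Pa(1) by (auto simp: S0_def)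
    have "y \<in> Ua \<union> Aa \<Longrightarrow> S \<inter> an u = {}" using an_u Pa(5) by blast
    then have "S \<inter> an_es Ua Aa y u = {}"
      using SAa Pa(4,5,6) by (cases u) (auto simp: an_es_not_var upd_def S0_def)
    then show ?thesis
      using X_focus_app_es_extend[OF Pa(2,3) \<open>x \<in> S\<close> Pa(5,6) \<open>y \<notin> pdom p\<close> stable] by blast
  qed
qed

lemma X_focus_app_es:
  assumes refocus: "\<And>P U' A' s S'. isM P U' A' \<Longrightarrow> plugP P (s, []) = p \<Longrightarrow> S' \<subseteq> A' \<Longrightarrow>
      S' \<noteq> {} \<Longrightarrow> S' \<inter> pdom p = {} \<Longrightarrow> X_focus p S' (U' \<union> A') A'"
    and focus_M: "y \<in> U \<union> A \<Longrightarrow> M_focus p y N A"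
    and focus_X: "\<And>S'. S' \<subseteq> A \<Longrightarrow> S' \<noteq> {} \<Longrightarrow> S' \<inter> pdom p = {} \<Longrightarrow> X_focus p S' N A"
    and "U \<union> A \<subseteq> N" and stable: "stable_es N A y u" and "y \<notin> pdom p"
    and extra: "y \<in> N \<Longrightarrow> y \<notin> U \<union> A \<Longrightarrow> S \<inter> an u = {}"
    and S: "S \<subseteq> an_es U A y u" "S \<noteq> {}" "S \<inter> pdom (app_es p y u) = {}"
  shows "X_focus (app_es p y u) S (un_es N A y u \<union> an_es N A y u) (an_es N A y u)"
proof (cases "y \<in> U \<union> A \<and> S \<inter> an u \<noteq> {}")
  case True
  then obtain P1 U1 A1 where P1: "isM P1 U1 A1" "plugP P1 (Var y, []) = p" "y \<notin> U1 \<union> A1"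
    "U1 \<union> A1 \<subseteq> N" "A1 \<subseteq> A"
    using focus_M by (blast elim: M_focusE)
  have "y \<in> N" using True \<open>U \<union> A \<subseteq> N\<close> by blast
  show ?thesis
  proof (cases "S \<inter> A1 = {}")
    case True
    then show ?thesis
      using X_focus_app_es_inert[OF P1 \<open>y \<notin> pdom p\<close> \<open>y \<in> N\<close> stable]
        \<open>y \<in> U \<union> A \<and> S \<inter> an u \<noteq> {}\<close> by blast
  next
    case False
    have "S \<inter> A1 \<inter> pdom p = {}" using S(3) by auto
    then obtain x Pa Ua Aa where Pa: "x \<in> S \<inter> A1" "isX Pa Ua Aa" "plugP Pa (Var x, []) = p"
      "S \<inter> A1 \<inter> Aa = {}" "Ua \<union> Aa \<subseteq> U1 \<union> A1" "Aa \<subseteq> A1"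
      using refocus[OF P1(1,2), of "S \<inter> A1"] False by (blast elim: X_focusE)
    then have "S \<inter> an_es Ua Aa y u = {}" "Ua \<union> Aa \<subseteq> N" "Aa \<subseteq> A"
      using P1(3-5) by (auto simp: an_es_def)
    then show ?thesis
      using X_focus_app_es_extend[OF Pa(2,3) _ _ _ \<open>y \<notin> pdom p\<close> stable] Pa(1) by blast
  qed
next
  case False
  then have "y \<in> N \<Longrightarrow> S \<inter> an u = {}" using extra by blast
  then show ?thesis using X_focus_app_es_preimage[OF focus_X \<open>U \<union> A \<subseteq> N\<close> stable \<open>y \<notin> pdom p\<close> _ S]
    by blast
qed

lemma M_focus_app_es_hole:
  assumes "isM P U A" and "plugP P (Var y, []) = p" and "y \<notin> pdom p" and "y \<notin> U \<union> A"
    and "isH H" and focus: "x \<in> U \<union> A \<Longrightarrow> M_focus p x (U \<union> A) A"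
    and x: "x \<in> U \<union> A \<union> ctx_un H \<union> ctx_an H" and "x \<noteq> y"
  shows "M_focus (app_es p y (plugC H s)) x (U \<union> A \<union> ctx_un H \<union> ctx_an H) (A \<union> ctx_an H)"
proof (cases "x \<in> U \<union> A")
  case True
  then obtain P2 U2 A2 where P2: "isM P2 U2 A2" "plugP P2 (Var x, []) = p" "x \<notin> U2 \<union> A2"
    "U2 \<union> A2 \<subseteq> U \<union> A" "A2 \<subseteq> A"
    using focus[OF True] by (elim M_focusE)
  have "stable_es (U \<union> A) A y (plugC H s)" using assms(4) by (simp add: stable_es_def)
  moreover have "y \<notin> U2 \<union> A2" using P2(4) assms(4) by blast
  ultimately have F: "M_focus (app_es p y (plugC H s)) x (U \<union> A) A"
    using M_focus_app_es_extend[OF P2 assms(3) \<open>x \<noteq> y\<close>] assms(4) by (simp add: un_es_def an_es_def)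
  show ?thesis by (rule M_focus_mono[OF F]) auto
next
  case False
  then obtain H' where H': "isH H'" "plugC H' (Var x) = plugC H s" "x \<notin> ctx_un H' \<union> ctx_an H'"
    "ctx_un H' \<union> ctx_an H' \<subseteq> ctx_un H \<union> ctx_an H" "ctx_an H' \<subseteq> ctx_an H"
    using isH_refocus[OF assms(5), of x s] x by blast
  have "y \<notin> cdom P" using assms(2,3) by auto
  then have "M_focus (plugP (appC (plugP P (Var y, [])) y H') (Var x, [])) x
      (U \<union> ctx_un H' \<union> (A \<union> ctx_an H')) (A \<union> ctx_an H')"
    using M_focusI[OF M_hole[OF assms(1) _ assms(4) H'(1)] refl] False H'(3) by blast
  then have F: "M_focus (app_es p y (plugC H s)) x (U \<union> ctx_un H' \<union> (A \<union> ctx_an H')) (A \<union> ctx_an H')"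
    using assms(2) H'(2) by simp
  show ?thesis by (rule M_focus_mono[OF F]) (use H'(4,5) in auto)
qed

lemma X_focus_app_es_hole:
  assumes "isM P U A" and "plugP P (Var y, []) = p" and "y \<notin> pdom p" and "y \<notin> U \<union> A"
    and "isH H" and focus: "S \<inter> A \<noteq> {} \<Longrightarrow> X_focus p (S \<inter> A) (U \<union> A) A"
    and S: "S \<subseteq> A \<union> ctx_an H" "S \<noteq> {}" "y \<notin> S"
  shows "X_focus (app_es p y (plugC H s)) S (U \<union> A \<union> ctx_un H \<union> ctx_an H) (A \<union> ctx_an H)"
proof (cases "S \<inter> A = {}")
  case False
  then obtain x Pa Ua Aa where Pa: "x \<in> S \<inter> A" "isX Pa Ua Aa" "plugP Pa (Var x, []) = p"
    "S \<inter> A \<inter> Aa = {}" "Ua \<union> Aa \<subseteq> U \<union> A" "Aa \<subseteq> A"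
    using focus[OF False] by (elim X_focusE)
  have "stable_es (U \<union> A) A y (plugC H s)" using assms(4) by (simp add: stable_es_def)
  moreover have "S \<inter> an_es Ua Aa y (plugC H s) = {}" using Pa(4-6) assms(4) by (auto simp: an_es_def)
  ultimately have F: "X_focus (app_es p y (plugC H s)) S (U \<union> A) A"
    using X_focus_app_es_extend[OF Pa(2,3) _ Pa(5,6) assms(3)] Pa(1) assms(4)
    by (simp add: un_es_def an_es_def)
  show ?thesis by (rule X_focus_mono[OF F]) auto
next
  case True
  then have "S \<subseteq> ctx_an H" using S(1) by blast
  then obtain x H' where H': "x \<in> S" "isHa H'" "plugC H' (Var x) = plugC H s" "S \<inter> ctx_an H' = {}"
    "ctx_un H' \<union> ctx_an H' \<subseteq> ctx_un H \<union> ctx_an H" "ctx_an H' \<subseteq> ctx_an H"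
    using isH_refocus_Ha[OF assms(5) _ S(2), of s] by blast
  have "y \<notin> cdom P" using assms(2,3) by auto
  then have "X_focus (plugP (appC (plugP P (Var y, [])) y H') (Var x, [])) S
      (U - {y} \<union> ctx_un H' \<union> (A \<union> ctx_an H')) (A \<union> ctx_an H')"
    using X_focusI[OF H'(1) X_fromM[OF assms(1) _ assms(4) H'(2)] refl] True H'(4) by blast
  then have F: "X_focus (app_es p y (plugC H s)) S (U - {y} \<union> ctx_un H' \<union> (A \<union> ctx_an H'))
      (A \<union> ctx_an H')"
    using assms(2) H'(3) by simp
  show ?thesis by (rule X_focus_mono[OF F]) (use H'(5,6) in auto)
qed

lemma M_focus_isM:
  assumes "isM P U A" and "plugP P (s, []) = p" and "x \<in> U \<union> A" and "x \<notin> pdom p"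
  shows "M_focus p x (U \<union> A) A"
  using assms
proof (induction p arbitrary: P U A s x rule: prog_induct)
  case (Nil t)
  then obtain H where "isH H" "plugC H s = t" "U = ctx_un H" "A = ctx_an H" by (elim isM_NilE)
  then show ?case using M_focus_base[of H x s] Nil.prems(3) by simp
next
  case (app_es p y u)
  have x: "x \<notin> pdom p" "x \<noteq> y" using app_es.prems(4) by auto
  from app_es.prems(1,2) show ?case
  proof (cases rule: isM_app_esE)
    case (es P0 U0 A0)
    have "x \<in> un_es U0 A0 y u \<union> an_es U0 A0 y u" using app_es.prems(3) es(6,7) by simp
    from M_focus_app_es[OF app_es.IH app_es.IH[OF es(1,2)] subset_refl es(5,4) x this]
    show ?thesis using es(6,7) by simp
  next
    case (hole P0 U0 A0 H)
    have "U \<union> A = U0 \<union> A0 \<union> ctx_un H \<union> ctx_an H" using hole(8,9) by auto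
    then show ?thesis
      using M_focus_app_es_hole[OF hole(1,2,4,5,6) app_es.IH[OF hole(1,2)] _ x(2), of s]
        app_es.prems(3) x(1) hole(7,9) by simp
  qed
qed

lemma X_focus_isM:
  assumes "isM P U A" and "plugP P (s, []) = p" and "S \<subseteq> A" and "S \<noteq> {}" and "S \<inter> pdom p = {}"
  shows "X_focus p S (U \<union> A) A"
  using assms
proof (induction p arbitrary: P U A s S rule: prog_induct)
  case (Nil t)
  then obtain H where "isH H" "plugC H s = t" "U = ctx_un H" "A = ctx_an H" by (elim isM_NilE)
  then show ?case using X_focus_base[of H S s] Nil.prems(3,4) by simp
next
  case (app_es p y u)
  from app_es.prems(1,2) show ?case
  proof (cases rule: isM_app_esE)
    case (es P0 U0 A0)
    have "X_focus (app_es p y u) S (un_es (U0 \<union> A0) A0 y u \<union> an_es (U0 \<union> A0) A0 y u)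
        (an_es (U0 \<union> A0) A0 y u)"
      by (rule X_focus_app_es[OF app_es.IH M_focus_isM[OF es(1,2)] app_es.IH[OF es(1,2)] subset_refl])
        (use es app_es.prems(3-5) in auto)
    then show ?thesis using es(6,7) by simp
  next
    case (hole P0 U0 A0 H)
    have "X_focus p (S \<inter> A0) (U0 \<union> A0) A0" if "S \<inter> A0 \<noteq> {}"
      by (rule app_es.IH[OF hole(1,2)]) (use that app_es.prems(5) in auto)
    moreover have "U \<union> A = U0 \<union> A0 \<union> ctx_un H \<union> ctx_an H" using hole(8,9) by auto
    ultimately show ?thesis
      using X_focus_app_es_hole[OF hole(1,2,4,5,6), of S s] app_es.prems(3-5) hole(7,9) by simp
  qed
qed

lemma stable_es_insert:
  "stable_es (U \<union> A) A y u \<Longrightarrow> (y = w \<Longrightarrow> is_val u) \<Longrightarrow> stable_es (insert w (U \<union> A)) A y u"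
  by (auto simp: stable_es_def fireball_def)

lemma es_insert_subset:
  assumes "y = w \<Longrightarrow> is_val u"
  shows "un_es (insert w (U \<union> A)) A y u \<union> an_es (insert w (U \<union> A)) A y u
      \<subseteq> insert w (un_es U A y u \<union> an_es U A y u)"
    and "an_es (insert w (U \<union> A)) A y u \<subseteq> an_es U A y u"
proof -
  show "un_es (insert w (U \<union> A)) A y u \<union> an_es (insert w (U \<union> A)) A y u
      \<subseteq> insert w (un_es U A y u \<union> an_es U A y u)"
    using assms by (cases "y \<in> U \<union> A") (auto simp: un_es_Un_an_es)
  show "an_es (insert w (U \<union> A)) A y u \<subseteq> an_es U A y u"
  proof (cases "y \<in> U \<union> A \<or> y \<noteq> w")
    case True
    then have "an_es (insert w (U \<union> A)) A y u = an_es U A y u" by (auto simp: an_es_def)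
    then show ?thesis by simp
  next
    case False
    then show ?thesis using assms by auto
  qed
qed

text \<open>The variable \<open>w\<close> in the hole of an exponential context may be needed by the refocused
  contexts; the assumption that it is bound to a value, if at all, keeps the ESs stable for it.\<close>

lemma M_focus_isX:
  assumes "isX P U A" and "plugP P (Var w, []) = p" and "pred_option is_val (lookupP P w)"
    and "x \<in> U \<union> A" and "x \<notin> pdom p"
  shows "M_focus p x (insert w (U \<union> A)) A"
  using assms
proof (induction p arbitrary: P U A w x rule: prog_induct)
  case (Nil t)
  then obtain H where "isHa H" "plugC H (Var w) = t" "U = ctx_un H" "A = ctx_an H" by (elim isX_NilE)
  then have "M_focus (t, []) x (U \<union> A) A"
    using M_focus_base[OF isHa_isH, of H x "Var w"] Nil.prems(4) by simp
  then show ?case by (rule M_focus_mono) auto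
next
  case (app_es p y u)
  have x: "x \<notin> pdom p" "x \<noteq> y" using app_es.prems(5) by auto
  from app_es.prems(1,2) show ?case
  proof (cases rule: isX_app_esE)
    case (es P0 U0 A0)
    have "y \<notin> cdom P0" using es(2,4) by auto
    then have val: "pred_option is_val (lookupP P0 w)" "y = w \<Longrightarrow> is_val u"
      using lookupP_appP_val app_es.prems(3) es(3) by blast+
    have mem: "x \<in> un_es U0 A0 y u \<union> an_es U0 A0 y u" using app_es.prems(4) es(6,7) by simp
    have stable: "stable_es (insert w (U0 \<union> A0)) A0 y u" using stable_es_insert es(5) val(2) by blast
    have "M_focus (app_es p y u) x (un_es (insert w (U0 \<union> A0)) A0 y u \<union> an_es (insert w (U0 \<union> A0)) A0 y u)
        (an_es (insert w (U0 \<union> A0)) A0 y u)"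
      by (rule M_focus_app_es[where U = U0 and A = A0])
        (fact M_focus_isM app_es.IH[OF es(1,2) val(1)] es(4) x mem stable | blast)+
    moreover note es_insert_subset[of y w u U0 A0]
    ultimately show ?thesis using val(2) es(6,7) by (auto elim!: M_focus_mono)
  next
    case (fromM P0 U0 A0 H)
    have "U \<union> A = U0 \<union> A0 \<union> ctx_un H \<union> ctx_an H" using fromM(8,9) by auto
    then show ?thesis
      using M_focus_app_es_hole[OF fromM(1,2,4,5) isHa_isH[OF fromM(6)] M_focus_isM[OF fromM(1,2)]
          _ x(2), of "Var w"] app_es.prems(4) x(1) fromM(7,9)
      by (auto elim!: M_focus_mono)
  next
    case (hole P0 U0 A0)
    have "y \<notin> cdom P0" using hole(2,4) by auto
    then have val: "pred_option is_val (lookupP P0 y)" by (simp add: lookupP_eq_None)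
    have stable: "stable_es (insert y (U0 \<union> A0)) A0 y (Var w)" using hole(5) by (simp add: stable_es_def)
    have mem: "x \<in> un_es U0 A0 y (Var w) \<union> an_es U0 A0 y (Var w)"
      using app_es.prems(4) hole(5,7,8) x(2) by (auto simp: upd_def)
    have "M_focus (app_es p y (Var w)) x
        (un_es (insert y (U0 \<union> A0)) A0 y (Var w) \<union> an_es (insert y (U0 \<union> A0)) A0 y (Var w))
        (an_es (insert y (U0 \<union> A0)) A0 y (Var w))"
      by (rule M_focus_app_es[where U = U0 and A = A0])
        (fact M_focus_isM app_es.IH[OF hole(1,2) val] hole(4) x mem stable | blast)+
    then show ?thesis unfolding hole(6) by (rule M_focus_mono) (use hole(5,7,8) in \<open>auto simp: upd_def\<close>)
  qed
qed

lemma X_focus_isX: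
  assumes "isX P U A" and "plugP P (Var w, []) = p" and "pred_option is_val (lookupP P w)"
    and "S \<subseteq> A" and "S \<noteq> {}" and "S \<inter> pdom p = {}"
  shows "X_focus p S (insert w (U \<union> A)) A"
  using assms
proof (induction p arbitrary: P U A w S rule: prog_induct)
  case (Nil t)
  then obtain H where "isHa H" "plugC H (Var w) = t" "U = ctx_un H" "A = ctx_an H" by (elim isX_NilE)
  then have "X_focus (t, []) S (U \<union> A) A"
    using X_focus_base[OF isHa_isH, of H S "Var w"] Nil.prems(4,5) by simp
  then show ?case by (rule X_focus_mono) auto
next
  case (app_es p y u)
  from app_es.prems(1,2) show ?case
  proof (cases rule: isX_app_esE)
    case (es P0 U0 A0)
    have "y \<notin> cdom P0" using es(2,4) by auto
    then have val: "pred_option is_val (lookupP P0 w)" "y = w \<Longrightarrow> is_val u"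
      using lookupP_appP_val app_es.prems(3) es(3) by blast+
    have stable: "stable_es (insert w (U0 \<union> A0)) A0 y u" using stable_es_insert es(5) val(2) by blast
    have extra: "S \<inter> an u = {}" if "y \<in> insert w (U0 \<union> A0)" "y \<notin> U0 \<union> A0" using that val(2) by auto
    have S: "S \<subseteq> an_es U0 A0 y u" using app_es.prems(4) es(7) by simp
    have focus_M: "M_focus p y (insert w (U0 \<union> A0)) A0" if "y \<in> U0 \<union> A0"
      using M_focus_isX[OF es(1,2) val(1) that es(4)] .
    have "X_focus (app_es p y u) S
        (un_es (insert w (U0 \<union> A0)) A0 y u \<union> an_es (insert w (U0 \<union> A0)) A0 y u)
        (an_es (insert w (U0 \<union> A0)) A0 y u)"
      by (rule X_focus_app_es[where U = U0 and A = A0])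
        (fact X_focus_isM focus_M app_es.IH[OF es(1,2) val(1)] stable es(4) extra S
          app_es.prems(5,6) | blast)+
    moreover note es_insert_subset[of y w u U0 A0]
    ultimately show ?thesis using val(2) es(6,7) by (auto elim!: X_focus_mono)
  next
    case (fromM P0 U0 A0 H)
    have "X_focus p (S \<inter> A0) (U0 \<union> A0) A0" if "S \<inter> A0 \<noteq> {}"
      by (rule X_focus_isM[OF fromM(1,2)]) (use that app_es.prems(6) in auto)
    moreover have "U \<union> A = U0 \<union> A0 \<union> ctx_un H \<union> ctx_an H" using fromM(8,9) by auto
    ultimately show ?thesis
      using X_focus_app_es_hole[OF fromM(1,2,4,5) isHa_isH[OF fromM(6)], of S "Var w"]
        app_es.prems(4-6) fromM(7,9)
      by (auto elim!: X_focus_mono)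
  next
    case (hole P0 U0 A0)
    have "y \<notin> cdom P0" using hole(2,4) by auto
    then have val: "pred_option is_val (lookupP P0 y)" by (simp add: lookupP_eq_None)
    have stable: "stable_es (insert y (U0 \<union> A0)) A0 y (Var w)" using hole(5) by (simp add: stable_es_def)
    have focus_M: "M_focus p y (insert y (U0 \<union> A0)) A0" if "y \<in> U0 \<union> A0"
      using M_focus_isX[OF hole(1,2) val that hole(4)] .
    have S: "S \<subseteq> an_es U0 A0 y (Var w)" "S \<inter> pdom (app_es p y (Var w)) = {}"
      using app_es.prems(4,6) hole(5,8) by (auto simp: upd_def)
    have "X_focus (app_es p y (Var w)) S
        (un_es (insert y (U0 \<union> A0)) A0 y (Var w) \<union> an_es (insert y (U0 \<union> A0)) A0 y (Var w))
        (an_es (insert y (U0 \<union> A0)) A0 y (Var w))"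
      by (rule X_focus_app_es[where U = U0 and A = A0])
        (fact X_focus_isM focus_M app_es.IH[OF hole(1,2) val] stable hole(4) S app_es.prems(5) | blast | simp)+
    then show ?thesis unfolding hole(6) by (rule X_focus_mono) (use hole(5,7,8) in \<open>auto simp: upd_def\<close>)
  qed
qed

section \<open>Redexes\<close>

definition M_redex :: "prog \<Rightarrow> bool" where
  "M_redex p \<longleftrightarrow> (\<exists>P U A s. isM P U A \<and> plugP P (s, []) = p \<and> is_redex s)"

definition X_redex :: "prog \<Rightarrow> bool" where
  "X_redex p \<longleftrightarrow> (\<exists>P U A x v. isX P U A \<and> plugP P (Var x, []) = p \<and> lookupP P x = Some v \<and> is_val v)"

lemma finite_vars: "finite (vars t)"
  by (induction t) auto

lemma finite_pvars: "finite (pvars p)"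
  unfolding pvars_def using finite_vars by (auto split: prod.splits)

lemma ex_und_step_iff: "(\<exists>q. und_step p q) \<longleftrightarrow> M_redex p \<or> X_redex p"
proof
  assume "\<exists>q. und_step p q"
  then show "M_redex p \<or> X_redex p"
    unfolding und_step_def um_step_def ue_step_def M_redex_def X_redex_def by fastforce
next
  assume "M_redex p \<or> X_redex p"
  then show "\<exists>q. und_step p q"
  proof
    assume "M_redex p"
    then obtain P U A x t u where "isM P U A" "plugP P (App (Lam x t) u, []) = p"
      unfolding M_redex_def by (metis is_redex.elims(2))
    moreover obtain z where "z \<notin> pvars p"
      using ex_new_if_finite[OF infinite_UNIV_nat finite_pvars] by blast
    ultimately show ?thesis unfolding und_step_def um_step_def by blast
  next
    assume "X_redex p"
    then show ?thesis unfolding und_step_def ue_step_def X_redex_def by blast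
  qed
qed

lemma no_redex_Nil: "fireball t \<Longrightarrow> \<not> M_redex (t, []) \<and> \<not> X_redex (t, [])"
  unfolding M_redex_def X_redex_def plugP_eq_Nil_iff
  using fireball_plugC_not_redex by fastforce

lemma no_redex_app_es:
  assumes "\<not> M_redex p" and "\<not> X_redex p" and "x \<notin> pdom p"
    and "x \<in> nvp p \<Longrightarrow> fireball u" and "x \<in> anp p \<Longrightarrow> \<not> is_val u"
  shows "\<not> M_redex (app_es p x u) \<and> \<not> X_redex (app_es p x u)"
proof
  show "\<not> M_redex (app_es p x u)"
  proof
    assume "M_redex (app_es p x u)"
    then obtain P' U' A' s where P': "isM P' U' A'" "plugP P' (s, []) = app_es p x u" "is_redex s"
      unfolding M_redex_def by blast
    from P'(1,2) show False
    proof (cases rule: isM_app_esE)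
      case (es P U A)
      then show False using assms(1) P'(3) unfolding M_redex_def by blast
    next
      case (hole P U A H)
      then have "fireball (plugC H s)" using assms(4) isM_hole_in_nvp by blast
      then show False using P'(3) fireball_plugC_not_redex by blast
    qed
  qed
  show "\<not> X_redex (app_es p x u)"
  proof
    assume "X_redex (app_es p x u)"
    then obtain P' U' A' w v where P': "isX P' U' A'" "plugP P' (Var w, []) = app_es p x u"
      "lookupP P' w = Some v" "is_val v"
      unfolding X_redex_def by blast
    from P'(1,2) show False
    proof (cases rule: isX_app_esE)
      case (es P U A)
      show False
      proof (cases "lookupP P w")
        case None
        then have "w = x" "v = u" using P'(3) es(3) by (auto split: if_splits)
        then show False using assms(5) isX_hole_in_anp[OF es(1,2)] es(4) P'(4) by blast
      next
        case (Some v')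
        then show False using assms(2) es(1,2,3) P'(3,4) unfolding X_redex_def by auto
      qed
    qed (use P'(3) in simp_all)
  qed
qed

lemma gvar_no_redex: "gvar y p \<Longrightarrow> \<not> M_redex p \<and> \<not> X_redex p \<and> nvp p = {y} \<and> anp p = {}"
proof (induction rule: gvar.induct)
  case (1 x)
  then show ?case using no_redex_Nil[of "Var x"] by simp
next
  case (2 x p y)
  then show ?case using no_redex_app_es[of p x "Var y"] by (simp add: upd_def)
next
  case (3 x p z t)
  then show ?case using no_redex_app_es[of p z t] nvp_eq_unp_Un_anp[of p] by (auto simp: an_es_def)
qed

lemma uabs_no_redex: "uabs p \<Longrightarrow> \<not> M_redex p \<and> \<not> X_redex p \<and> nvp p = {}"
proof (induction rule: uabs.induct)
  case (1 v)
  then show ?case using no_redex_Nil[of v] by (simp add: fireball_def)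
next
  case (2 x p v)
  then show ?case using gvar_no_redex[OF 2(1)] no_redex_app_es[of p x v] by (simp add: fireball_def)
next
  case (3 p x t)
  then show ?case using no_redex_app_es[of p x t] anp_subset_nvp[of p] by auto
qed

lemma uinert_no_redex: "uinert p \<Longrightarrow> \<not> M_redex p \<and> \<not> X_redex p"
proof (induction rule: uinert.induct)
  case (1 i)
  then show ?case using no_redex_Nil[of i] by (simp add: inert_plus_def fireball_def)
next
  case (2 x p i)
  then show ?case using gvar_no_redex[OF 2(1)] no_redex_app_es[of p x i] inert_not_val[of i]
    by (simp add: inert_plus_def fireball_def)
next
  case (3 p x i)
  then show ?case using no_redex_app_es[of p x i] inert_not_val[of i] by (simp add: fireball_def)
next
  case (4 p x v)
  then show ?case using no_redex_app_es[of p x v] by (simp add: fireball_def)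
next
  case (5 p x t)
  then show ?case using no_redex_app_es[of p x t] anp_subset_nvp[of p] by auto
qed

lemma unorm_no_redex: "unorm p \<Longrightarrow> \<not> M_redex p \<and> \<not> X_redex p"
  unfolding unorm_def using uinert_no_redex uabs_no_redex gvar_no_redex by blast

lemma M_redex_app_es:
  assumes "M_focus p x N A" and "x \<notin> pdom p" and "\<not> fireball u"
  shows "M_redex (app_es p x u)"
proof -
  obtain P U' A' where P: "isM P U' A'" "plugP P (Var x, []) = p" "x \<notin> U' \<union> A'"
    using assms(1) by (elim M_focusE)
  obtain H r where H: "isH H" "plugC H r = u" "is_redex r" using not_fireball_redex[OF assms(3)] by blast
  have "x \<notin> cdom P" using P(2) assms(2) by auto
  from M_hole[OF P(1) this P(3) H(1)] have "isM (appC p x H) (U' \<union> ctx_un H) (A' \<union> ctx_an H)"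
    using P(2) by simp
  then show ?thesis unfolding M_redex_def using H(2,3) by fastforce
qed

lemma X_redex_app_es:
  assumes "X_focus p {x} N A" and "x \<notin> pdom p" and "is_val u"
  shows "X_redex (app_es p x u)"
proof -
  obtain P U' A' where P: "isX P U' A'" "plugP P (Var x, []) = p" "x \<notin> A'"
    using assms(1) by (elim X_focusE) auto
  have "x \<notin> cdom P" using P(2) assms(2) by auto
  moreover have "stable_es (U' \<union> A') A' x u" using P(3) assms(3) by (simp add: stable_es_def fireball_def)
  ultimately have "isX (appP P x u) (un_es U' A' x u) (an_es U' A' x u)"
    "lookupP (appP P x u) x = Some u"
    using isX_appP[OF P(1)] lookupP_eq_None[of x P] by auto
  then show ?thesis unfolding X_redex_def using P(2) assms(3) by fastforce
qed

lemma redex_app_es: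
  assumes "M_redex p \<or> X_redex p" and "x \<notin> pdom p"
  shows "M_redex (app_es p x u) \<or> X_redex (app_es p x u)"
  using assms(1)
proof
  assume "M_redex p"
  then obtain P U A s where P: "isM P U A" "plugP P (s, []) = p" "is_redex s"
    unfolding M_redex_def by blast
  have x: "x \<notin> cdom P" using P(2) assms(2) by auto
  consider "stable_es (U \<union> A) A x u" | "x \<in> U \<union> A" "\<not> fireball u" | "x \<in> A" "is_val u"
    unfolding stable_es_def by blast
  then show ?thesis
  proof cases
    case 1
    from isM_appP[OF P(1) x 1] show ?thesis unfolding M_redex_def using P(2,3) by fastforce
  next
    case 2
    then show ?thesis using M_redex_app_es M_focus_isM[OF P(1,2)] assms(2) by blast
  next
    case 3
    then show ?thesis using X_redex_app_es X_focus_isM[OF P(1,2), of "{x}"] assms(2) by blast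
  qed
next
  assume "X_redex p"
  then obtain P U A w v where P: "isX P U A" "plugP P (Var w, []) = p" "lookupP P w = Some v" "is_val v"
    unfolding X_redex_def by blast
  have x: "x \<notin> cdom P" using P(2) assms(2) by auto
  have val: "pred_option is_val (lookupP P w)" using P(3,4) by simp
  consider "stable_es (U \<union> A) A x u" | "x \<in> U \<union> A" "\<not> fireball u" | "x \<in> A" "is_val u"
    unfolding stable_es_def by blast
  then show ?thesis
  proof cases
    case 1
    from isX_appP[OF P(1) x 1] show ?thesis unfolding X_redex_def using P(2-4) by fastforce
  next
    case 2
    then show ?thesis using M_redex_app_es M_focus_isX[OF P(1,2) val] assms(2) by blast
  next
    case 3
    then show ?thesis using X_redex_app_es X_focus_isX[OF P(1,2) val, of "{x}"] assms(2) by blast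
  qed
qed

section \<open>Positions of variables\<close>

definition M_position :: "prog \<Rightarrow> var \<Rightarrow> bool" where
  "M_position p x \<longleftrightarrow> (\<exists>P U A. isM P U A \<and> plugP P (Var x, []) = p)"

definition X_position :: "prog \<Rightarrow> var \<Rightarrow> bool" where
  "X_position p x \<longleftrightarrow> (\<exists>P U A. isX P U A \<and> plugP P (Var x, []) = p)"

lemma M_position_focus:
  assumes "M_position p x" and "x \<notin> pdom p"
  obtains N A where "M_focus p x N A"
proof -
  obtain P U A where P: "isM P U A" "plugP P (Var x, []) = p" using assms(1) by (auto simp: M_position_def)
  show thesis
  proof (cases "x \<in> U \<union> A")
    case True
    then show thesis using that M_focus_isM[OF P _ assms(2)] by blast
  next
    case False
    then show thesis using that M_focusI[OF P] by blast
  qed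
qed

lemma X_position_focus:
  assumes "X_position p x" and "x \<notin> pdom p"
  obtains N A where "X_focus p {x} N A"
proof -
  obtain P U A where P: "isX P U A" "plugP P (Var x, []) = p" using assms(1) by (auto simp: X_position_def)
  have "x \<notin> cdom P" using P(2) assms(2) by auto
  then have val: "pred_option is_val (lookupP P x)" by (simp add: lookupP_eq_None)
  show thesis
  proof (cases "x \<in> A")
    case True
    then show thesis using that X_focus_isX[OF P val, of "{x}"] assms(2) by blast
  next
    case False
    then show thesis using that X_focusI[OF _ P(1,2), of "{x}"] by blast
  qed
qed

lemma M_position_app_es:
  assumes "M_position p x" and "y \<notin> pdom p"
    and "y \<in> nvp p \<Longrightarrow> fireball u" and "y \<in> anp p \<Longrightarrow> \<not> is_val u"
  shows "M_position (app_es p y u) x"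
proof -
  obtain P U A where P: "isM P U A" "plugP P (Var x, []) = p" using assms(1) by (auto simp: M_position_def)
  have "y \<notin> cdom P" using P(2) assms(2) by auto
  moreover have "stable_es (U \<union> A) A y u"
    using isM_sets_subset[OF P] assms(3,4) by (auto simp: stable_es_def)
  ultimately show ?thesis
    using isM_appP[OF P(1)] P(2) unfolding M_position_def by fastforce
qed

lemma X_position_app_es:
  assumes "X_position p x" and "y \<notin> pdom p"
    and "y \<in> nvp p \<Longrightarrow> fireball u" and "y \<in> anp p \<Longrightarrow> \<not> is_val u"
  shows "X_position (app_es p y u) x"
proof -
  obtain P U A where P: "isX P U A" "plugP P (Var x, []) = p" using assms(1) by (auto simp: X_position_def)
  have "y \<notin> cdom P" using P(2) assms(2) by auto
  moreover have "stable_es (U \<union> A) A y u"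
    using isX_sets_subset[OF P] assms(3,4) by (auto simp: stable_es_def)
  ultimately show ?thesis
    using isX_appP[OF P(1)] P(2) unfolding X_position_def by fastforce
qed

lemma M_position_app_es_hole:
  assumes "M_position p y" and "y \<notin> pdom p" and "isH H"
  shows "M_position (app_es p y (plugC H (Var x))) x"
proof -
  obtain N A where "M_focus p y N A" using M_position_focus[OF assms(1,2)] .
  then obtain P U' A' where P: "isM P U' A'" "plugP P (Var y, []) = p" "y \<notin> U' \<union> A'"
    by (elim M_focusE)
  have "y \<notin> cdom P" using P(2) assms(2) by auto
  from M_hole[OF P(1) this P(3) assms(3)] show ?thesis
    unfolding M_position_def using P(2) by fastforce
qed

lemma X_position_app_es_hole:
  assumes "M_position p y" and "y \<notin> pdom p" and "isHa H"
  shows "X_position (app_es p y (plugC H (Var x))) x"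
proof -
  obtain N A where "M_focus p y N A" using M_position_focus[OF assms(1,2)] .
  then obtain P U' A' where P: "isM P U' A'" "plugP P (Var y, []) = p" "y \<notin> U' \<union> A'"
    by (elim M_focusE)
  have "y \<notin> cdom P" using P(2) assms(2) by auto
  from X_fromM[OF P(1) this P(3) assms(3)] show ?thesis
    unfolding X_position_def using P(2) by fastforce
qed

lemma X_position_app_es_Var:
  assumes "X_position p y" and "y \<notin> pdom p"
  shows "X_position (app_es p y (Var x)) x"
proof -
  obtain N A where "X_focus p {y} N A" using X_position_focus[OF assms(1,2)] .
  then obtain P U' A' where P: "isX P U' A'" "plugP P (Var y, []) = p" "y \<notin> A'"
    by (elim X_focusE) auto
  have "y \<notin> cdom P" using P(2) assms(2) by auto
  from X_hole[OF P(1) this P(3)] show ?thesis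
    unfolding X_position_def using P(2) by fastforce
qed

lemma M_position_redex: "M_position p x \<Longrightarrow> x \<notin> pdom p \<Longrightarrow> \<not> fireball u \<Longrightarrow> M_redex (app_es p x u)"
  by (metis M_position_focus M_redex_app_es)

lemma X_position_redex: "X_position p x \<Longrightarrow> x \<notin> pdom p \<Longrightarrow> is_val u \<Longrightarrow> X_redex (app_es p x u)"
  by (metis X_position_focus X_redex_app_es)

lemma gvar_M_position: "gvar y p \<Longrightarrow> y \<notin> pdom p \<Longrightarrow> M_position p y"
proof (induction rule: gvar.induct)
  case (1 x)
  then show ?case using M_base[OF isH.intros(1)] unfolding M_position_def by fastforce
next
  case (2 x p y)
  then show ?case using M_position_app_es_hole[of p x Hole y] isH.intros(1) by simp
next
  case (3 x p z t)
  then show ?case using M_position_app_es[of p x z t] gvar_no_redex[OF 3(1)] by simp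
qed

lemma uinert_M_position: "uinert p \<Longrightarrow> x \<in> nvp p \<Longrightarrow> x \<notin> pdom p \<Longrightarrow> M_position p x"
proof (induction arbitrary: x rule: uinert.induct)
  case (1 i)
  then obtain H where "isH H" "plugC H (Var x) = i"
    using inert_focus_H by (auto simp: inert_plus_def)
  then show ?case using M_base unfolding M_position_def by fastforce
next
  case (2 y p i)
  have "nvp p = {y}" using gvar_no_redex[OF 2(1)] by simp
  then have "x \<in> nv i" using 2(4) by auto
  then obtain H where "isH H" "plugC H (Var x) = i"
    using inert_focus_H 2(3) by (auto simp: inert_plus_def)
  then show ?case using M_position_app_es_hole gvar_M_position[OF 2(1,2)] 2(2) by blast
next
  case (3 p y i)
  show ?case
  proof (cases "x \<in> nv i")
    case True
    then obtain H where "isH H" "plugC H (Var x) = i" using inert_focus_H 3(4) by blast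
    then show ?thesis using M_position_app_es_hole 3 by blast
  next
    case False
    then show ?thesis
      using 3 M_position_app_es[of p x y i] inert_not_val[OF 3(4)] by (auto simp: fireball_def)
  qed
next
  case (4 p y v)
  have "x \<in> nvp p" using 4(3,5,7) unp_subset_nvp[of p] by auto
  then show ?case using 4 M_position_app_es[of p x y v] by (auto simp: fireball_def)
next
  case (5 p y t)
  then show ?case using M_position_app_es[of p x y t] anp_subset_nvp[of p] by auto
qed

lemma uinert_X_position: "uinert p \<Longrightarrow> x \<in> anp p \<Longrightarrow> x \<notin> pdom p \<Longrightarrow> X_position p x"
proof (induction arbitrary: x rule: uinert.induct)
  case (1 i)
  then obtain x' H where "x' \<in> {x}" "isHa H" "plugC H (Var x') = i"
    using inert_focus_Ha[of i "{x}"] by (auto simp: inert_plus_def)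
  then show ?case using X_base unfolding X_position_def by fastforce
next
  case (2 y p i)
  have "nvp p = {y}" "anp p = {}" using gvar_no_redex[OF 2(1)] by simp_all
  then have "x \<in> an i" using 2(3,4) nvp_eq_unp_Un_anp[of p] by (auto simp: an_es_not_var inert_plus_def)
  then obtain x' H where "x' \<in> {x}" "isHa H" "plugC H (Var x') = i"
    using inert_focus_Ha[of i "{x}"] 2(3) by (auto simp: inert_plus_def)
  then show ?case using X_position_app_es_hole gvar_M_position[OF 2(1,2)] 2(2) by blast
next
  case (3 p y i)
  have y: "y \<in> unp p \<union> anp p" using 3(3) nvp_eq_unp_Un_anp by blast
  consider (old) "x \<in> anp p" "x \<noteq> y" | (var) "i = Var x" "y \<in> anp p" | (new) "x \<in> an i"
    using 3(6) y by (cases i) (auto simp: an_es_not_var upd_def split: if_splits)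
  then show ?case
  proof cases
    case old
    then show ?thesis
      using 3 X_position_app_es[of p x y i] inert_not_val[OF 3(4)] by (auto simp: fireball_def)
  next
    case var
    then show ?thesis using X_position_app_es_Var 3 by simp
  next
    case new
    then obtain x' H where "x' \<in> {x}" "isHa H" "plugC H (Var x') = i"
      using inert_focus_Ha[of i "{x}"] \<open>inert i\<close> by auto
    then show ?thesis
      using X_position_app_es_hole uinert_M_position[OF 3(1,3,2)] 3(2) by blast
  qed
next
  case (4 p y v)
  then show ?case using X_position_app_es[of p x y v] unp_subset_nvp by (auto simp: fireball_def)
next
  case (5 p y t)
  have "y \<notin> unp p \<union> anp p" using 5(3) nvp_eq_unp_Un_anp[of p] by blast
  then have "x \<in> anp p" using 5(5) by (simp add: an_es_def)
  then show ?case using 5 X_position_app_es[of p x y t] anp_subset_nvp[of p] by auto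
qed

section \<open>Normal forms\<close>

lemma unorm_Nil: "fireball t \<Longrightarrow> unorm (t, [])"
  unfolding unorm_def
  using fireball_cases[of t] gvar.intros(1) uinert.intros(1) uabs.intros(1) by (cases t) auto

lemma gvar_app_es:
  assumes "gvar y p" and "x \<notin> pdom p"
  shows "unorm (app_es p x u) \<or> M_redex (app_es p x u)"
proof (cases "x = y")
  case False
  then show ?thesis using gvar.intros(3)[OF assms] unfolding unorm_def by blast
next
  case True
  then have x: "gvar x p" using assms(1) by simp
  consider z where "u = Var z" | "inert_plus u" | "is_val u" | "\<not> fireball u"
    using fireball_cases[of u] is_var.elims(2)[of u] by blast
  then show ?thesis
  proof cases
    case 1
    then show ?thesis using gvar.intros(2)[OF x assms(2)] unfolding unorm_def by blast
  next
    case 2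
    then show ?thesis using uinert.intros(2)[OF x assms(2)] unfolding unorm_def by blast
  next
    case 3
    then show ?thesis using uabs.intros(2)[OF x assms(2)] unfolding unorm_def by blast
  next
    case 4
    then show ?thesis using M_position_redex gvar_M_position[OF x assms(2)] assms(2) by blast
  qed
qed

lemma uinert_app_es:
  assumes "uinert p" and "x \<notin> pdom p"
  shows "unorm (app_es p x u) \<or> M_redex (app_es p x u) \<or> X_redex (app_es p x u)"
proof -
  consider "x \<notin> nvp p" | "x \<in> nvp p" "inert u" | "x \<in> unp p" "x \<notin> anp p" "is_val u"
    | "x \<in> nvp p" "\<not> fireball u" | "x \<in> anp p" "is_val u"
    using nvp_eq_unp_Un_anp[of p] by (auto simp: fireball_def)
  then show ?thesis
  proof cases
    case 1
    then show ?thesis using uinert.intros(5)[OF assms] unfolding unorm_def by blast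
  next
    case 2
    then show ?thesis using uinert.intros(3)[OF assms] unfolding unorm_def by blast
  next
    case 3
    then show ?thesis using uinert.intros(4)[OF assms] unfolding unorm_def by blast
  next
    case 4
    then show ?thesis using M_position_redex uinert_M_position assms by blast
  next
    case 5
    then show ?thesis using X_position_redex uinert_X_position assms by blast
  qed
qed

lemma unorm_app_es:
  assumes "unorm p" and "x \<notin> pdom p"
  shows "unorm (app_es p x u) \<or> M_redex (app_es p x u) \<or> X_redex (app_es p x u)"
  using assms gvar_app_es uinert_app_es uabs.intros(3) unfolding unorm_def by blast

lemma redex_if_not_unorm:
  assumes "distinct (map fst (snd p))" and "\<not> unorm p"
  shows "M_redex p \<or> X_redex p"
  using assms
proof (induction p rule: prog_induct)
  case (Nil t)
  then obtain H r where "isH H" "plugC H r = t" "is_redex r"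
    using unorm_Nil not_fireball_redex by blast
  then show ?case using M_base unfolding M_redex_def by fastforce
next
  case (app_es p x u)
  have "distinct (map fst (snd p))" "x \<notin> pdom p"
    using app_es.prems(1) by (auto simp: app_es_def pdom_def)
  then show ?case
    using app_es.IH redex_app_es unorm_app_es app_es.prems(2) by blast
qed

lemma wellnamed_distinct_dom: "wellnamed p \<Longrightarrow> distinct (map fst (snd p))"
proof -
  have "distinct (concat (map (\<lambda>(x, u). x # bl u) E)) \<Longrightarrow> distinct (map fst E)" for E
    by (induction E) force+
  then show "wellnamed p \<Longrightarrow> distinct (map fst (snd p))"
    unfolding wellnamed_def pbl_def by simp
qed

theorem mainTheorem8:
  fixes p :: prog
  assumes "wellnamed p"
  shows "(\<not> (\<exists>q. und_step p q)) \<longleftrightarrow> unorm p"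
proof -
  have "(\<nexists>q. und_step p q) \<longleftrightarrow> \<not> M_redex p \<and> \<not> X_redex p"
    using ex_und_step_iff[of p] by blast
  also have "\<dots> \<longleftrightarrow> unorm p"
    using unorm_no_redex redex_if_not_unorm[OF wellnamed_distinct_dom[OF assms]] by blast
  finally show ?thesis .
qed

end
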